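(* Let $\Omega$ be a bounded domain in $\mathbb{C}^n$ and $f$ a smooth function on $\Omega$. Then for every $\varepsilon>0$ there are smooth non-negative functions $f^+$ and $f^-$ on $\Omega$ such that $f=f^+-f^-$, $\|f^\pm\|_{L^1(\Omega)}\le\|f\|_{L^1(\Omega)}+\varepsilon$ and $\|f^\pm\|_{*,\Omega}\le\|f\|_{*,\Omega}+\varepsilon$. In particular, if $\mu$ and $\mu'$ are positive measures with compact supports in $\Omega$ such that $\mu\le\mu'$ and $\mu'$ is $W^*(\Omega)$-H\"older continuous, then $\mu$ is also $W^*(\Omega)$-H\"older continuous.
   Context: $d^c=\frac{1}{2i\pi}(\partial-\bar\partial)$, $\omega$ the standard K\"ahler form on $\mathbb{C}^n$. $W^*(\Omega)$ is the space of real $f\in W^{1,2}(\Omega)$ with $df\wedge d^cf\le T$ for some closed positive $(1,1)$-current $T$ of finite mass on $\Omega$, with norm $\|f\|_{*,\Omega}=\|f\|_{L^1(\Omega)}+\min\{(\int_\Omega T\wedge\omega^{n-1})^{1/2}\}$ (taken to be $+\infty$ if $f\notin W^*(\Omega)$). A finite positive measure $\mu$ with compact support in $\Omega$ is $W^*(\Omega)$-H\"older continuous if there are $c,\alpha>0$ with $|\mu(f)|\le c\|f\|_{L^1(\Omega)}^\alpha$ for every smooth $f$ on $\Omega$ with $\|f\|_{*,\Omega}\le1$. *)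

theory Defs
  imports "HOL-Analysis.Analysis"
begin

fun Ck_on :: "nat \<Rightarrow> 'a::real_normed_vector set \<Rightarrow> ('a \<Rightarrow> 'b::real_normed_vector) \<Rightarrow> bool" where
  "Ck_on 0 S f = continuous_on S f"
| "Ck_on (Suc k) S f =
     ((\<forall>x\<in>S. f differentiable (at x)) \<and>
      (\<forall>v. Ck_on k S (\<lambda>x. frechet_derivative f (at x) v)))"

definition smooth_on :: "'a::real_normed_vector set \<Rightarrow> ('a \<Rightarrow> 'b::real_normed_vector) \<Rightarrow> bool" where
  "smooth_on S f \<longleftrightarrow> (\<forall>k. Ck_on k S f)"

definition pd :: "('a::real_normed_vector \<Rightarrow> real) \<Rightarrow> 'a \<Rightarrow> 'a \<Rightarrow> real" where
  "pd f v x = frechet_derivative f (at x) v"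

definition test_fn :: "(complex^'n) set \<Rightarrow> (complex^'n \<Rightarrow> real) \<Rightarrow> bool" where
  "test_fn \<Omega> \<phi> \<longleftrightarrow> smooth_on UNIV \<phi> \<and>
     compact (closure {x. \<phi> x \<noteq> 0}) \<and> closure {x. \<phi> x \<noteq> 0} \<subseteq> \<Omega>"

definition ex :: "'n \<Rightarrow> complex^'n" where "ex j = axis j 1"
definition ey :: "'n \<Rightarrow> complex^'n" where "ey j = axis j \<i>"

definition L2_on :: "(complex^'n) set \<Rightarrow> (complex^'n \<Rightarrow> real) \<Rightarrow> bool" where
  "L2_on \<Omega> g \<longleftrightarrow> set_borel_measurable lborel \<Omega> g \<and> set_integrable lborel \<Omega> (\<lambda>x. (g x)\<^sup>2)"

definition weak_deriv :: "(complex^'n) set \<Rightarrow> (complex^'n \<Rightarrow> real) \<Rightarrow> complex^'n \<Rightarrow> (complex^'n \<Rightarrow> real) \<Rightarrow> bool" where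
  "weak_deriv \<Omega> f v g \<longleftrightarrow> (\<forall>\<phi>. test_fn \<Omega> \<phi> \<longrightarrow>
     (LINT x:\<Omega>|lborel. f x * pd \<phi> v x) = - (LINT x:\<Omega>|lborel. g x * \<phi> x))"

definition W12_grad :: "(complex^'n) set \<Rightarrow> (complex^'n \<Rightarrow> real) \<Rightarrow> (complex^'n \<Rightarrow> complex^'n \<Rightarrow> real) \<Rightarrow> bool" where
  "W12_grad \<Omega> f G \<longleftrightarrow> L2_on \<Omega> f \<and> (\<forall>v\<in>Basis. L2_on \<Omega> (G v) \<and> weak_deriv \<Omega> f v (G v))"

definition W12 :: "(complex^'n) set \<Rightarrow> (complex^'n \<Rightarrow> real) \<Rightarrow> bool" where
  "W12 \<Omega> f \<longleftrightarrow> (\<exists>G. W12_grad \<Omega> f G)"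

text \<open>A (1,1)-current T = i \<Sum> T_jk dz_j \<and> dzbar_k on \<Omega> is given by its distribution
  coefficients T j k, acting on real test functions (extended complex-linearly).\<close>
type_synonym 'n current11 = "'n \<Rightarrow> 'n \<Rightarrow> (complex^'n \<Rightarrow> real) \<Rightarrow> complex"

text \<open>Action of T j k on the complex test functions d_l phi and dbar_l phi.\<close>
definition T_dz :: "'n current11 \<Rightarrow> 'n \<Rightarrow> 'n \<Rightarrow> 'n \<Rightarrow> (complex^'n \<Rightarrow> real) \<Rightarrow> complex" where
  "T_dz T j k l \<phi> = (T j k (pd \<phi> (ex l)) - \<i> * T j k (pd \<phi> (ey l))) / 2"
definition T_dzbar :: "'n current11 \<Rightarrow> 'n \<Rightarrow> 'n \<Rightarrow> 'n \<Rightarrow> (complex^'n \<Rightarrow> real) \<Rightarrow> complex" where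
  "T_dzbar T j k l \<phi> = (T j k (pd \<phi> (ex l)) + \<i> * T j k (pd \<phi> (ey l))) / 2"

definition is_current11 :: "(complex^'n) set \<Rightarrow> 'n current11 \<Rightarrow> bool" where
  "is_current11 \<Omega> T \<longleftrightarrow> (\<forall>j k \<phi> \<psi> (a::real) (b::real). test_fn \<Omega> \<phi> \<longrightarrow> test_fn \<Omega> \<psi> \<longrightarrow>
     T j k (\<lambda>x. a * \<phi> x + b * \<psi> x) = of_real a * T j k \<phi> + of_real b * T j k \<psi>)"

text \<open>Positivity of i \<Sum> S_jk dz_j \<and> dzbar_k: the coefficient matrix evaluated on nonnegative
  test functions is Hermitian positive semidefinite.\<close>
definition positive11 :: "(complex^'n) set \<Rightarrow> 'n current11 \<Rightarrow> bool" where
  "positive11 \<Omega> S \<longleftrightarrow> (\<forall>\<phi> (\<xi>::'n \<Rightarrow> complex). test_fn \<Omega> \<phi> \<longrightarrow> (\<forall>x. 0 \<le> \<phi> x) \<longrightarrow>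
     (let q = (\<Sum>j\<in>UNIV. \<Sum>k\<in>UNIV. S j k \<phi> * \<xi> j * cnj (\<xi> k)) in Im q = 0 \<and> 0 \<le> Re q))"

text \<open>Closedness dT = 0 (i.e. \<partial>T = 0 and \<partial>bar T = 0) in the sense of distributions.\<close>
definition closed11 :: "(complex^'n) set \<Rightarrow> 'n current11 \<Rightarrow> bool" where
  "closed11 \<Omega> T \<longleftrightarrow> (\<forall>j k l \<phi>. test_fn \<Omega> \<phi> \<longrightarrow>
     T_dz T j k l \<phi> = T_dz T l k j \<phi> \<and> T_dzbar T j k l \<phi> = T_dzbar T j l k \<phi>)"

definition closed_positive11 :: "(complex^'n) set \<Rightarrow> 'n current11 \<Rightarrow> bool" where
  "closed_positive11 \<Omega> T \<longleftrightarrow> is_current11 \<Omega> T \<and> positive11 \<Omega> T \<and> closed11 \<Omega> T"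

text \<open>Mass \<integral>_\<Omega> T \<and> \<omega>^{n-1}, with \<omega> = dd^c|z|^2 = (i/\<pi>) \<Sum> dz_j \<and> dzbar_j:
  T \<and> \<omega>^{n-1} = 2^n (n-1)! / \<pi>^{n-1} (\<Sum>_j T_jj) dLeb.  The measure of \<Omega> is
  computed as a supremum over test functions 0 \<le> \<phi> \<le> 1.\<close>
definition mass11 :: "(complex^'n) set \<Rightarrow> 'n current11 \<Rightarrow> ennreal" where
  "mass11 \<Omega> T = ennreal (2 ^ CARD('n) * fact (CARD('n) - 1) / pi ^ (CARD('n) - 1)) *
     (SUP \<phi>\<in>{\<phi>. test_fn \<Omega> \<phi> \<and> (\<forall>x. 0 \<le> \<phi> x \<and> \<phi> x \<le> 1)}. ennreal (\<Sum>j\<in>UNIV. Re (T j j \<phi>)))"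

text \<open>df \<and> d^c f = (i/\<pi>) \<partial>f \<and> \<partial>bar f, with coefficients (1/\<pi>) \<partial>_j f conj(\<partial>_k f).\<close>
definition dz_f :: "(complex^'n \<Rightarrow> complex^'n \<Rightarrow> real) \<Rightarrow> 'n \<Rightarrow> complex^'n \<Rightarrow> complex" where
  "dz_f G j x = (complex_of_real (G (ex j) x) - \<i> * complex_of_real (G (ey j) x)) / 2"

definition ddc_current :: "(complex^'n) set \<Rightarrow> (complex^'n \<Rightarrow> complex^'n \<Rightarrow> real) \<Rightarrow> 'n current11" where
  "ddc_current \<Omega> G j k \<phi> = (LINT x:\<Omega>|lborel. complex_of_real (\<phi> x) * dz_f G j x * cnj (dz_f G k x)) / of_real pi"

definition dominated_by :: "(complex^'n) set \<Rightarrow> (complex^'n \<Rightarrow> real) \<Rightarrow> 'n current11 \<Rightarrow> bool" where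
  "dominated_by \<Omega> f T \<longleftrightarrow> (\<exists>G. W12_grad \<Omega> f G \<and>
      positive11 \<Omega> (\<lambda>j k \<phi>. T j k \<phi> - ddc_current \<Omega> G j k \<phi>))"

definition admissible_T :: "(complex^'n) set \<Rightarrow> (complex^'n \<Rightarrow> real) \<Rightarrow> 'n current11 set" where
  "admissible_T \<Omega> f = {T. closed_positive11 \<Omega> T \<and> mass11 \<Omega> T < \<infinity> \<and> dominated_by \<Omega> f T}"

definition Wstar :: "(complex^'n) set \<Rightarrow> (complex^'n \<Rightarrow> real) \<Rightarrow> bool" where
  "Wstar \<Omega> f \<longleftrightarrow> W12 \<Omega> f \<and> admissible_T \<Omega> f \<noteq> {}"

definition L1norm :: "(complex^'n) set \<Rightarrow> (complex^'n \<Rightarrow> real) \<Rightarrow> ennreal" where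
  "L1norm \<Omega> f = (\<integral>\<^sup>+ x\<in>\<Omega>. ennreal \<bar>f x\<bar> \<partial>lborel)"

definition star_norm :: "(complex^'n) set \<Rightarrow> (complex^'n \<Rightarrow> real) \<Rightarrow> ennreal" where
  "star_norm \<Omega> f = (if Wstar \<Omega> f then
      L1norm \<Omega> f + ennreal (sqrt (enn2real (INF T\<in>admissible_T \<Omega> f. mass11 \<Omega> T)))
    else \<infinity>)"

definition Wstar_Holder :: "(complex^'n) set \<Rightarrow> (complex^'n) measure \<Rightarrow> bool" where
  "Wstar_Holder \<Omega> \<mu> \<longleftrightarrow> (\<exists>c>0. \<exists>\<alpha>>0. \<forall>f. smooth_on \<Omega> f \<and> star_norm \<Omega> f \<le> 1 \<longrightarrow>
      \<bar>LINT x:\<Omega>|\<mu>. f x\<bar> \<le> c * enn2real (L1norm \<Omega> f) powr \<alpha>)"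

definition compact_support_in :: "(complex^'n) set \<Rightarrow> (complex^'n) measure \<Rightarrow> bool" where
  "compact_support_in \<Omega> \<mu> \<longleftrightarrow> (\<exists>K. compact K \<and> K \<subseteq> \<Omega> \<and> emeasure \<mu> (space \<mu> - K) = 0)"

end

theory Submission
  imports Defs
begin

text \<open>For d > 0 the functions f_+ = (f + sqrt (f^2 + d^2))/2 and f_- = (-f + sqrt (f^2 + d^2))/2
  are smooth and nonnegative, f_+ - f_- = f and |f_\<plusminus>| \<le> |f| + d/2, so their L^1 norms exceed
  that of f by at most d vol(\<Omega>)/2.  Moreover df_\<plusminus> = a_\<plusminus> df with smooth |a_\<plusminus>| \<le> 1; hence
  a_\<plusminus> G is a weak gradient of f_\<plusminus> whenever G is one of f, and
  df_\<plusminus> \<and> d^c f_\<plusminus> = a_\<plusminus>^2 df \<and> d^c f \<le> T whenever df \<and> d^c f \<le> T.  So every current admissible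
  for f is admissible for f_\<plusminus>, which bounds the *-norms of f_\<plusminus>.

  For the Holder statement take \<parallel>f\<parallel>_* \<le> 1 and rescale f_\<plusminus> by 1/(1 + \<eta>), so that their
  *-norms stay \<le> 1.  As \<mu> \<le> \<mu>' on nonnegative functions,
  |\<mu>(f)| \<le> (1 + \<eta>) max \<mu>(f_\<plusminus>/(1 + \<eta>)) \<le> (1 + \<eta>) c (\<parallel>f\<parallel>_L1 + \<eta>)^\<alpha>,
  and \<eta> \<rightarrow> 0 yields the Holder estimate for \<mu> with the constants of \<mu>'.\<close>

section \<open>Calculus of C^k functions\<close>

lemma Ck_on_SucD: "Ck_on (Suc k) S f \<Longrightarrow> Ck_on k S f"
proof (induction k arbitrary: f)
  case 0
  then show ?case
    by (auto intro!: continuous_at_imp_continuous_on differentiable_imp_continuous_within)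
next
  case (Suc k)
  then show ?case by auto
qed

lemma Ck_on_subset: "T \<subseteq> S \<Longrightarrow> Ck_on k S f \<Longrightarrow> Ck_on k T f"
  by (induction k arbitrary: f) (auto intro: continuous_on_subset)

lemma Ck_on_cong:
  assumes "open S" "\<And>x. x \<in> S \<Longrightarrow> f x = g x"
  shows "Ck_on k S f = Ck_on k S g"
  using assms(2)
proof (induction k arbitrary: f g)
  case 0
  then show ?case using continuous_on_cong by auto
next
  case (Suc k)
  have fg: "\<And>y. y \<in> S \<Longrightarrow> f y = g y" and gf: "\<And>y. y \<in> S \<Longrightarrow> g y = f y"
    using Suc.prems by auto
  have diff: "f differentiable (at x) \<longleftrightarrow> g differentiable (at x)" if "x \<in> S" for x
    using has_derivative_transform_within_open[of f _ x UNIV S g]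
      has_derivative_transform_within_open[of g _ x UNIV S f] assms(1) that fg gf
    unfolding differentiable_def by blast
  show ?case
  proof (cases "\<forall>x\<in>S. f differentiable (at x)")
    case True
    have "Ck_on k S (\<lambda>x. frechet_derivative f (at x) v) = Ck_on k S (\<lambda>x. frechet_derivative g (at x) v)"
      for v
      by (rule Suc.IH)
        (simp add: frechet_derivative_transform_within_open[OF _ assms(1) _ fg] True)
    then show ?thesis using diff by simp
  next
    case False
    then show ?thesis using diff by auto
  qed
qed

lemma Ck_on_const: "Ck_on k S (\<lambda>x. c)"
  by (induction k arbitrary: c) simp_all

lemma Ck_on_SucI:
  assumes "open S" "\<And>x. x \<in> S \<Longrightarrow> (f has_derivative f' x) (at x)"
    "\<And>v. Ck_on k S (\<lambda>x. f' x v)"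
  shows "Ck_on (Suc k) S f"
proof -
  have "Ck_on k S (\<lambda>x. frechet_derivative f (at x) v)" for v
    using Ck_on_cong[OF assms(1), of "\<lambda>x. frechet_derivative f (at x) v" "\<lambda>x. f' x v"]
      assms(2,3) frechet_derivative_at by metis
  moreover have "\<forall>x\<in>S. f differentiable (at x)"
    using assms(2) unfolding differentiable_def by blast
  ultimately show ?thesis by simp
qed

lemma Ck_on_Suc_has_derivative:
  "Ck_on (Suc k) S f \<Longrightarrow> x \<in> S \<Longrightarrow> (f has_derivative frechet_derivative f (at x)) (at x)"
  by (simp add: frechet_derivative_works)

lemma Ck_on_add:
  fixes f g :: "'a::real_normed_vector \<Rightarrow> real"
  assumes "open S"
  shows "Ck_on k S f \<Longrightarrow> Ck_on k S g \<Longrightarrow> Ck_on k S (\<lambda>x. f x + g x)"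
proof (induction k arbitrary: f g)
  case 0
  then show ?case by (auto intro: continuous_intros)
next
  case (Suc k)
  show ?case
    by (rule Ck_on_SucI[OF assms,
          where f'="\<lambda>x v. frechet_derivative f (at x) v + frechet_derivative g (at x) v"])
      (use Suc in \<open>auto intro!: derivative_eq_intros Ck_on_Suc_has_derivative simp: Suc.IH\<close>)
qed

lemma Ck_on_mult:
  fixes f g :: "'a::real_normed_vector \<Rightarrow> real"
  assumes "open S"
  shows "Ck_on k S f \<Longrightarrow> Ck_on k S g \<Longrightarrow> Ck_on k S (\<lambda>x. f x * g x)"
proof (induction k arbitrary: f g)
  case 0
  then show ?case by (auto intro: continuous_intros)
next
  case (Suc k)
  let ?f' = "\<lambda>x v. f x * frechet_derivative g (at x) v + frechet_derivative f (at x) v * g x"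
  have "((\<lambda>x. f x * g x) has_derivative ?f' x) (at x)" if "x \<in> S" for x
    using Suc.prems that by (auto intro!: derivative_eq_intros Ck_on_Suc_has_derivative)
  moreover have "Ck_on k S (\<lambda>x. ?f' x v)" for v
    using Suc.prems Ck_on_SucD[OF Suc.prems(1)] Ck_on_SucD[OF Suc.prems(2)]
    by (auto intro!: Ck_on_add[OF assms] Suc.IH)
  ultimately show ?case by (rule Ck_on_SucI[OF assms])
qed

lemma Ck_on_inverse:
  fixes f :: "'a::real_normed_vector \<Rightarrow> real"
  assumes "open S"
  shows "Ck_on k S f \<Longrightarrow> \<forall>x\<in>S. f x \<noteq> 0 \<Longrightarrow> Ck_on k S (\<lambda>x. inverse (f x))"
proof (induction k arbitrary: f)
  case 0
  then show ?case by (auto intro: continuous_intros)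
next
  case (Suc k)
  let ?f' = "\<lambda>x v. (-1) * (inverse (f x) * (frechet_derivative f (at x) v * inverse (f x)))"
  have "((\<lambda>x. inverse (f x)) has_derivative ?f' x) (at x)" if "x \<in> S" for x
    using Suc.prems that
    by (auto intro!: derivative_eq_intros Ck_on_Suc_has_derivative simp: field_simps power2_eq_square)
  moreover have "Ck_on k S (\<lambda>x. inverse (f x))"
    using Suc.IH Suc.prems Ck_on_SucD by blast
  then have "Ck_on k S (\<lambda>x. ?f' x v)" for v
    using Suc.prems by (intro Ck_on_mult[OF assms] Ck_on_const) auto
  ultimately show ?case by (rule Ck_on_SucI[OF assms])
qed

lemma Ck_on_sqrt:
  fixes f :: "'a::real_normed_vector \<Rightarrow> real"
  assumes "open S"
  shows "Ck_on k S f \<Longrightarrow> \<forall>x\<in>S. f x > 0 \<Longrightarrow> Ck_on k S (\<lambda>x. sqrt (f x))"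
proof (induction k arbitrary: f)
  case 0
  then show ?case by (auto intro: continuous_intros)
next
  case (Suc k)
  let ?f' = "\<lambda>x v. frechet_derivative f (at x) v * (inverse (sqrt (f x)) * (1/2))"
  have "((\<lambda>x. sqrt (f x)) has_derivative ?f' x) (at x)" if "x \<in> S" for x
    using Suc.prems that
    by (auto intro!: derivative_eq_intros Ck_on_Suc_has_derivative simp: field_simps)
  moreover have "Ck_on k S (\<lambda>x. sqrt (f x))"
    using Suc.IH Suc.prems Ck_on_SucD by blast
  then have "Ck_on k S (\<lambda>x. inverse (sqrt (f x)))"
    using Suc.prems(2) by (intro Ck_on_inverse[OF assms]) auto
  then have "Ck_on k S (\<lambda>x. ?f' x v)" for v
    using Suc.prems by (intro Ck_on_mult[OF assms] Ck_on_const) auto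
  ultimately show ?case by (rule Ck_on_SucI[OF assms])
qed

lemma Ck_on_Un:
  assumes "open A" "open B"
  shows "Ck_on k A f \<Longrightarrow> Ck_on k B f \<Longrightarrow> Ck_on k (A \<union> B) f"
proof (induction k arbitrary: f)
  case 0
  then show ?case using continuous_on_open_Un[OF assms] by simp
next
  case (Suc k)
  then show ?case by auto
qed

lemma Ck_on_extend_by_zero:
  fixes b :: "'a::real_normed_vector \<Rightarrow> real"
  assumes \<Omega>: "open \<Omega>" and b: "Ck_on k \<Omega> b" and \<phi>: "Ck_on k UNIV \<phi>"
    and K: "closed K" "K \<subseteq> \<Omega>" "\<And>x. x \<notin> K \<Longrightarrow> \<phi> x = 0"
  shows "Ck_on k UNIV (\<lambda>x. if x \<in> \<Omega> then b x * \<phi> x else 0)"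
proof -
  have K_open: "open (-K)" using K(1) by auto
  have "Ck_on k \<Omega> (\<lambda>x. if x \<in> \<Omega> then b x * \<phi> x else 0)"
    using Ck_on_cong[OF \<Omega>, of "\<lambda>x. if x \<in> \<Omega> then b x * \<phi> x else 0" "\<lambda>x. b x * \<phi> x"]
      Ck_on_mult[OF \<Omega> b Ck_on_subset[OF _ \<phi>]] by simp
  moreover have "Ck_on k (-K) (\<lambda>x. if x \<in> \<Omega> then b x * \<phi> x else 0)"
    using Ck_on_cong[OF K_open, of "\<lambda>x. if x \<in> \<Omega> then b x * \<phi> x else 0" "\<lambda>x. 0"]
      Ck_on_const K(3) by auto
  ultimately have "Ck_on k (\<Omega> \<union> -K) (\<lambda>x. if x \<in> \<Omega> then b x * \<phi> x else 0)"
    by (rule Ck_on_Un[OF \<Omega> K_open])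
  moreover have "\<Omega> \<union> -K = UNIV" using K(2) by auto
  ultimately show ?thesis by simp
qed

lemma smooth_on_imp_Ck_on: "smooth_on S f \<Longrightarrow> Ck_on k S f"
  unfolding smooth_on_def by blast

lemma smooth_on_imp_continuous_on: "smooth_on S f \<Longrightarrow> continuous_on S f"
  using smooth_on_imp_Ck_on[of S f 0] by simp

lemma smooth_on_const: "smooth_on S (\<lambda>x. c)"
  unfolding smooth_on_def using Ck_on_const by blast

lemma smooth_on_add: "open S \<Longrightarrow> smooth_on S f \<Longrightarrow> smooth_on S g \<Longrightarrow> smooth_on S (\<lambda>x. f x + g x :: real)"
  unfolding smooth_on_def using Ck_on_add by blast

lemma smooth_on_mult: "open S \<Longrightarrow> smooth_on S f \<Longrightarrow> smooth_on S g \<Longrightarrow> smooth_on S (\<lambda>x. f x * g x :: real)"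
  unfolding smooth_on_def using Ck_on_mult by blast

lemma smooth_on_inverse:
  "open S \<Longrightarrow> smooth_on S g \<Longrightarrow> \<forall>x\<in>S. g x \<noteq> 0 \<Longrightarrow> smooth_on S (\<lambda>x. inverse (g x :: real))"
  unfolding smooth_on_def using Ck_on_inverse by blast

lemma smooth_on_sqrt:
  "open S \<Longrightarrow> smooth_on S g \<Longrightarrow> \<forall>x\<in>S. g x > 0 \<Longrightarrow> smooth_on S (\<lambda>x. sqrt (g x :: real))"
  unfolding smooth_on_def using Ck_on_sqrt by blast

lemma pd_compose_real:
  assumes "(g has_real_derivative g') (at (f x))" "f differentiable (at x)"
  shows "pd (\<lambda>y. g (f y)) v x = g' * pd f v x"
proof -
  have "((\<lambda>y. g (f y)) has_derivative (\<lambda>v. frechet_derivative f (at x) v * g')) (at x)"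
    using DERIV_compose_FDERIV[OF assms(1) assms(2)[unfolded frechet_derivative_works]] .
  then have "frechet_derivative (\<lambda>y. g (f y)) (at x) = (\<lambda>v. frechet_derivative f (at x) v * g')"
    by (rule frechet_derivative_at[symmetric])
  then show ?thesis unfolding pd_def by simp
qed

section \<open>Integration by parts against test functions\<close>

lemma frechet_derivative_eq_0_outside:
  fixes h :: "'a::real_normed_vector \<Rightarrow> real"
  assumes "closed K" "\<And>x. x \<notin> K \<Longrightarrow> h x = 0" "x \<notin> K"
  shows "frechet_derivative h (at x) v = 0"
proof -
  have "(h has_derivative (\<lambda>_. 0)) (at x)"
    by (rule has_derivative_transform_within_open[of "\<lambda>_. 0" "\<lambda>_. 0" x UNIV "-K"])
       (use assms in auto)
  then show ?thesis using frechet_derivative_at by metis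
qed

lemma integrable_continuous_vanishing_outside_compact:
  fixes g :: "'a::euclidean_space \<Rightarrow> real"
  assumes "continuous_on UNIV g" "compact K" "\<And>x. x \<notin> K \<Longrightarrow> g x = 0"
  shows "integrable lborel g"
proof -
  have "integrable lborel (\<lambda>x. indicator K x *\<^sub>R g x)"
    by (rule borel_integrable_compact[OF assms(2)]) (use assms(1) continuous_on_subset in blast)
  moreover have "(\<lambda>x. indicator K x *\<^sub>R g x) = g"
    using assms(3) by (auto simp: fun_eq_iff indicator_def)
  ultimately show ?thesis by simp
qed

lemma lborel_integral_translate:
  fixes h :: "'a::euclidean_space \<Rightarrow> real"
  assumes "h \<in> borel_measurable borel"
  shows "integrable lborel (\<lambda>x. h (x + c)) \<longleftrightarrow> integrable lborel h"
    and "integral\<^sup>L lborel (\<lambda>x. h (x + c)) = integral\<^sup>L lborel h"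
proof -
  have "integrable lborel h \<longleftrightarrow> integrable lborel (\<lambda>x. h (c + x))"
    using integrable_distr_eq[of "(+) c" lborel borel h] assms by (simp add: lborel_distr_plus)
  then show "integrable lborel (\<lambda>x. h (x + c)) \<longleftrightarrow> integrable lborel h"
    by (simp add: add.commute)
  have "integral\<^sup>L lborel h = integral\<^sup>L lborel (\<lambda>x. h (c + x))"
    using integral_distr[of "(+) c" lborel borel h] assms by (simp add: lborel_distr_plus)
  then show "integral\<^sup>L lborel (\<lambda>x. h (x + c)) = integral\<^sup>L lborel h"
    by (simp add: add.commute)
qed

lemma has_real_derivative_along_line:
  fixes h :: "'a::real_normed_vector \<Rightarrow> real"
  assumes "h differentiable (at (x + s *\<^sub>R v))"
  shows "((\<lambda>s. h (x + s *\<^sub>R v)) has_real_derivative frechet_derivative h (at (x + s *\<^sub>R v)) v) (at s)"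
proof -
  let ?D = "frechet_derivative h (at (x + s *\<^sub>R v))"
  have hd: "(h has_derivative ?D) (at (x + s *\<^sub>R v))"
    using assms frechet_derivative_works by blast
  have "((\<lambda>s. x + s *\<^sub>R v) has_derivative (\<lambda>s. s *\<^sub>R v)) (at s)"
    by (auto intro!: derivative_eq_intros)
  from has_derivative_compose[OF this hd]
  have "((\<lambda>s. h (x + s *\<^sub>R v)) has_derivative (\<lambda>r. ?D (r *\<^sub>R v))) (at s)" .
  moreover have "(\<lambda>r. ?D (r *\<^sub>R v)) = (*) (?D v)"
    using linear_scale[OF has_derivative_linear[OF hd]] by (auto simp: fun_eq_iff)
  ultimately show ?thesis by (simp add: has_field_derivative_def)
qed

lemma abs_difference_quotient_le:
  fixes h :: "real \<Rightarrow> real"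
  assumes "\<And>s. (h has_real_derivative h' s) (at s)" "\<And>s. \<bar>h' s\<bar> \<le> B" "0 < t"
  shows "\<bar>(h t - h 0) / t\<bar> \<le> B"
proof -
  obtain z where "h t - h 0 = (t - 0) * h' z"
    using MVT2[of 0 t h h'] assms(1,3) by blast
  then show ?thesis using assms(2)[of z] assms(3) by simp
qed

lemma bounded_vanishing_outside_compactE:
  fixes g :: "'a::topological_space \<Rightarrow> real"
  assumes "continuous_on K g" "compact K" "\<And>x. x \<notin> K \<Longrightarrow> g x = 0"
  obtains B where "\<And>x. \<bar>g x\<bar> \<le> B"
proof -
  obtain B where "\<forall>y\<in>g ` K. norm y \<le> B"
    using compact_imp_bounded[OF compact_continuous_image[OF assms(1,2)]] bounded_iff by metis
  then have "\<bar>g x\<bar> \<le> max B 0" for x using assms(3) by (cases "x \<in> K") auto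
  then show ?thesis using that by blast
qed

lemma abs_difference_quotient_le_indicator:
  fixes h :: "'a::real_normed_vector \<Rightarrow> real"
  assumes line: "\<And>x s. ((\<lambda>s. h (x + s *\<^sub>R v)) has_real_derivative D (x + s *\<^sub>R v)) (at s)"
    and B: "\<And>x. \<bar>D x\<bar> \<le> B" and h0: "\<And>x. x \<notin> K \<Longrightarrow> h x = 0" and t: "0 < t" "t \<le> 1"
  shows "\<bar>(h (x + t *\<^sub>R v) - h x) / t\<bar> \<le> B * indicator ((\<lambda>p. fst p - snd p *\<^sub>R v) ` (K \<times> {0..1})) x"
proof (cases "x \<in> (\<lambda>p. fst p - snd p *\<^sub>R v) ` (K \<times> {0..1})")
  case True
  then show ?thesis using abs_difference_quotient_le[OF line B t(1)] by simp
next
  case False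
  have img: "k - s *\<^sub>R v \<in> (\<lambda>p. fst p - snd p *\<^sub>R v) ` (K \<times> {0..1})"
    if "k \<in> K" "s \<in> {0..1}" for k s
    using that by (intro image_eqI[where x="(k, s)"]) auto
  have "x \<notin> K" using img[of x 0] False by auto
  moreover have "x + t *\<^sub>R v \<notin> K" using img[of "x + t *\<^sub>R v" t] False t by auto
  ultimately show ?thesis using h0 False by simp
qed

text \<open>The difference quotients of h in direction v have integral 0 by translation invariance
  of Lebesgue measure, and converge to the derivative dominatedly.\<close>

lemma integral_frechet_derivative_eq_0:
  fixes h :: "'a::euclidean_space \<Rightarrow> real"
  assumes diff: "\<And>x. h differentiable (at x)"
    and cont: "continuous_on UNIV (\<lambda>x. frechet_derivative h (at x) v)"
    and K: "compact K" and h0: "\<And>x. x \<notin> K \<Longrightarrow> h x = 0"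
  shows "integral\<^sup>L lborel (\<lambda>x. frechet_derivative h (at x) v) = 0"
proof -
  define D where "D x = frechet_derivative h (at x) v" for x
  have hc: "continuous_on UNIV h"
    using diff by (meson continuous_at_imp_continuous_on differentiable_imp_continuous_within)
  then have hm: "h \<in> borel_measurable borel" by (rule borel_measurable_continuous_onI)
  have Dc: "continuous_on UNIV D" using cont unfolding D_def .
  then have Dm: "D \<in> borel_measurable borel" by (rule borel_measurable_continuous_onI)
  have "D x = 0" if "x \<notin> K" for x
    unfolding D_def using frechet_derivative_eq_0_outside[of K h] K h0 that
    by (simp add: compact_imp_closed)
  then obtain B where B: "\<And>x. \<bar>D x\<bar> \<le> B"
    using bounded_vanishing_outside_compactE[OF continuous_on_subset[OF Dc] K] by blast
  define K' where "K' = (\<lambda>p. fst p - snd p *\<^sub>R v) ` (K \<times> {0..1::real})"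
  have K': "compact K'" unfolding K'_def
    by (rule compact_continuous_image) (auto intro!: continuous_intros compact_Times K)
  define t where "t m = inverse (real (Suc m))" for m
  have t: "0 < t m" "t m \<le> 1" for m by (auto simp: t_def field_simps)
  define g where "g m x = (h (x + t m *\<^sub>R v) - h x) / t m" for m x
  have "integrable lborel h" by (rule integrable_continuous_vanishing_outside_compact[OF hc K h0])
  then have g0: "integral\<^sup>L lborel (g m) = 0" for m
    unfolding g_def by (simp add: lborel_integral_translate[OF hm])
  have line: "((\<lambda>s. h (x + s *\<^sub>R v)) has_real_derivative D (x + s *\<^sub>R v)) (at s)" for x s
    unfolding D_def by (rule has_real_derivative_along_line[OF diff])
  have "(\<lambda>m. g m x) \<longlonglongrightarrow> D x" for x
  proof -
    have "((\<lambda>s. (h (x + s *\<^sub>R v) - h x) / s) \<longlongrightarrow> D x) (at 0)"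
      using line[of x 0] by (simp add: has_field_derivative_iff)
    moreover have "filterlim t (at 0) sequentially"
      by (rule filterlim_atI) (use LIMSEQ_inverse_real_of_nat t in \<open>auto simp: t_def[abs_def]\<close>)
    ultimately show ?thesis unfolding g_def by (rule filterlim_compose)
  qed
  moreover have "\<bar>g m x\<bar> \<le> B * indicator K' x" for m x
    unfolding g_def K'_def by (rule abs_difference_quotient_le_indicator[OF line B h0 t])
  moreover have "integrable lborel (\<lambda>x. B * indicator K' x)"
    using K' emeasure_bounded_finite[OF compact_imp_bounded[OF K']]
    by (intro integrable_mult_right integrable_real_indicator) (auto simp: compact_imp_closed)
  moreover have "g m \<in> borel_measurable lborel" for m
    unfolding g_def using hm by measurable
  ultimately have "(\<lambda>m. integral\<^sup>L lborel (g m)) \<longlonglongrightarrow> integral\<^sup>L lborel D"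
    using Dm by (intro integral_dominated_convergence[where w="\<lambda>x. B * indicator K' x"]) auto
  then have "(\<lambda>m. 0::real) \<longlonglongrightarrow> integral\<^sup>L lborel D" by (simp add: g0)
  then show ?thesis unfolding D_def using LIMSEQ_unique tendsto_const by blast
qed

lemma test_fnD:
  assumes "test_fn \<Omega> \<phi>"
  shows "compact (closure {x. \<phi> x \<noteq> 0})" "closure {x. \<phi> x \<noteq> 0} \<subseteq> \<Omega>"
    "\<And>x. x \<notin> closure {x. \<phi> x \<noteq> 0} \<Longrightarrow> \<phi> x = 0" "\<And>k. Ck_on k UNIV \<phi>"
  using assms closure_subset[of "{x. \<phi> x \<noteq> 0}"] unfolding test_fn_def smooth_on_def by auto

lemma test_fn_vanishes_outside: "test_fn \<Omega> \<phi> \<Longrightarrow> x \<notin> \<Omega> \<Longrightarrow> \<phi> x = 0"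
  using test_fnD(2,3) by blast

lemma frechet_derivative_extend_by_zero_mult:
  fixes u :: "'a::real_normed_vector \<Rightarrow> real"
  assumes "open \<Omega>" "x \<in> \<Omega>" "u differentiable (at x)" "\<phi> differentiable (at x)"
  shows "frechet_derivative (\<lambda>x. if x \<in> \<Omega> then u x * \<phi> x else 0) (at x) v
     = frechet_derivative u (at x) v * \<phi> x + u x * frechet_derivative \<phi> (at x) v"
proof -
  have "((\<lambda>x. u x * \<phi> x) has_derivative
     (\<lambda>v. u x * frechet_derivative \<phi> (at x) v + frechet_derivative u (at x) v * \<phi> x)) (at x)"
    using has_derivative_mult assms(3,4) unfolding frechet_derivative_works by blast
  then have "((\<lambda>x. if x \<in> \<Omega> then u x * \<phi> x else 0) has_derivative
     (\<lambda>v. u x * frechet_derivative \<phi> (at x) v + frechet_derivative u (at x) v * \<phi> x)) (at x)"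
    by (rule has_derivative_transform_within_open[OF _ assms(1,2)]) simp
  from fun_cong[OF frechet_derivative_at[OF this], of v] show ?thesis by (simp add: add.commute)
qed

lemma integrable_extend_by_zero_mult:
  fixes b :: "'a::euclidean_space \<Rightarrow> real"
  assumes \<Omega>: "open \<Omega>" and b: "continuous_on \<Omega> b" and \<phi>: "continuous_on UNIV \<phi>"
    and K: "compact K" "K \<subseteq> \<Omega>" "\<And>x. x \<notin> K \<Longrightarrow> \<phi> x = 0"
  shows "integrable lborel (\<lambda>x. if x \<in> \<Omega> then b x * \<phi> x else 0)"
proof (rule integrable_continuous_vanishing_outside_compact[OF _ K(1)])
  show "continuous_on UNIV (\<lambda>x. if x \<in> \<Omega> then b x * \<phi> x else 0)"
    using Ck_on_extend_by_zero[of \<Omega> 0 b \<phi> K] assms by (simp add: compact_imp_closed)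
qed (use K(3) in auto)

lemma integration_by_parts_test_fn:
  fixes \<Omega> :: "(complex^'n) set" and u :: "complex^'n \<Rightarrow> real"
  assumes \<Omega>: "open \<Omega>" and u: "Ck_on 1 \<Omega> u" and \<phi>: "test_fn \<Omega> \<phi>"
  shows "(LINT x:\<Omega>|lborel. u x * pd \<phi> v x) = - (LINT x:\<Omega>|lborel. pd u v x * \<phi> x)"
proof -
  define K where "K = closure {x. \<phi> x \<noteq> 0}"
  note \<phi>K = test_fnD[OF \<phi>, folded K_def]
  have K: "closed K" using \<phi>K(1) compact_imp_closed by blast
  define h where "h x = (if x \<in> \<Omega> then u x * \<phi> x else 0)" for x
  define H\<^sub>1 where "H\<^sub>1 x = (if x \<in> \<Omega> then pd u v x * \<phi> x else 0)" for x
  define H\<^sub>2 where "H\<^sub>2 x = (if x \<in> \<Omega> then u x * pd \<phi> v x else 0)" for x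
  have h0: "h x = 0" if "x \<notin> K" for x using \<phi>K(3) that by (simp add: h_def)
  have pd\<phi>0: "pd \<phi> v x = 0" if "x \<notin> K" for x
    unfolding pd_def by (rule frechet_derivative_eq_0_outside[OF K \<phi>K(3) that])
  have \<phi>1: "Ck_on 1 UNIV \<phi>" by (rule \<phi>K(4))
  have dh: "frechet_derivative h (at x) v = H\<^sub>1 x + H\<^sub>2 x" for x
  proof (cases "x \<in> \<Omega>")
    case True
    then show ?thesis
      using frechet_derivative_extend_by_zero_mult[OF \<Omega> True] u \<phi>1
      unfolding h_def H\<^sub>1_def H\<^sub>2_def pd_def by simp
  next
    case False
    then have "x \<notin> K" using \<phi>K(2) by blast
    then show ?thesis using frechet_derivative_eq_0_outside[OF K h0] False by (simp add: H\<^sub>1_def H\<^sub>2_def)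
  qed
  have "integrable lborel H\<^sub>1" unfolding H\<^sub>1_def
    using u \<phi>1[unfolded One_nat_def, THEN Ck_on_SucD]
    by (intro integrable_extend_by_zero_mult[OF \<Omega> _ _ \<phi>K(1,2,3)]) (auto simp: pd_def)
  moreover have "integrable lborel H\<^sub>2" unfolding H\<^sub>2_def
    using u[unfolded One_nat_def, THEN Ck_on_SucD] \<phi>1
    by (intro integrable_extend_by_zero_mult[OF \<Omega> _ _ \<phi>K(1,2) pd\<phi>0]) (auto simp: pd_def)
  moreover have "Ck_on 1 UNIV h"
    unfolding h_def by (rule Ck_on_extend_by_zero[OF \<Omega> u \<phi>K(4) K \<phi>K(2,3)])
  then have "integral\<^sup>L lborel (\<lambda>x. frechet_derivative h (at x) v) = 0"
    by (intro integral_frechet_derivative_eq_0[OF _ _ \<phi>K(1) h0]) auto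
  ultimately have "integral\<^sup>L lborel H\<^sub>1 + integral\<^sup>L lborel H\<^sub>2 = 0"
    by (simp add: dh)
  moreover have "(LINT x:\<Omega>|lborel. u x * pd \<phi> v x) = integral\<^sup>L lborel H\<^sub>2"
    unfolding set_lebesgue_integral_def H\<^sub>2_def
    by (intro Bochner_Integration.integral_cong) (auto simp: indicator_def)
  moreover have "(LINT x:\<Omega>|lborel. pd u v x * \<phi> x) = integral\<^sup>L lborel H\<^sub>1"
    unfolding set_lebesgue_integral_def H\<^sub>1_def
    by (intro Bochner_Integration.integral_cong) (auto simp: indicator_def)
  ultimately show ?thesis by linarith
qed

lemma test_fn_extend_mult:
  fixes \<Omega> :: "(complex^'n) set"
  assumes \<Omega>: "open \<Omega>" and b: "smooth_on \<Omega> b" and \<phi>: "test_fn \<Omega> \<phi>"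
  shows "test_fn \<Omega> (\<lambda>x. if x \<in> \<Omega> then b x * \<phi> x else 0)"
proof -
  define K where "K = closure {x. \<phi> x \<noteq> 0}"
  note \<phi>K = test_fnD[OF \<phi>, folded K_def]
  have K: "closed K" using \<phi>K(1) compact_imp_closed by blast
  have "smooth_on UNIV (\<lambda>x. if x \<in> \<Omega> then b x * \<phi> x else 0)"
    using Ck_on_extend_by_zero[OF \<Omega> _ \<phi>K(4) K \<phi>K(2,3)] b unfolding smooth_on_def by blast
  moreover
  define S where "S = {x. (if x \<in> \<Omega> then b x * \<phi> x else 0) \<noteq> 0}"
  have "closure S \<subseteq> K"
    using \<phi>K(3) K by (intro closure_minimal) (auto simp: S_def)
  moreover from this have "compact (closure S)"
    using compact_Int_closed[OF \<phi>K(1) closed_closure, of S] by (simp add: Int_absorb1)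
  ultimately show ?thesis unfolding test_fn_def S_def using \<phi>K(2) by blast
qed

section \<open>Weak gradients\<close>

lemma set_borel_measurable_continuous_on_open:
  fixes \<Omega> :: "'a::euclidean_space set"
  assumes "open \<Omega>" "continuous_on \<Omega> (g :: _ \<Rightarrow> real)"
  shows "set_borel_measurable lborel \<Omega> g"
  unfolding set_borel_measurable_def
  using borel_measurable_continuous_on_indicator[OF _ assms(2)] assms(1)
  by (simp add: measurable_lborel2)

lemma L2_on_boundedI:
  fixes \<Omega> :: "(complex^'n) set"
  assumes m: "set_borel_measurable lborel \<Omega> u" and f: "L2_on \<Omega> f"
    and i: "set_integrable lborel \<Omega> (\<lambda>x. c)"
    and le: "\<forall>x\<in>\<Omega>. (u x)\<^sup>2 \<le> a * (f x)\<^sup>2 + c"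
  shows "L2_on \<Omega> u"
proof -
  have "(\<lambda>x. indicator \<Omega> x *\<^sub>R (u x)\<^sup>2) = (\<lambda>x. (indicator \<Omega> x *\<^sub>R u x)\<^sup>2)"
    by (auto simp: indicator_def fun_eq_iff)
  then have m2: "(\<lambda>x. indicator \<Omega> x *\<^sub>R (u x)\<^sup>2) \<in> borel_measurable lborel"
    using m unfolding set_borel_measurable_def by simp
  have "integrable lborel (\<lambda>x. a * (indicator \<Omega> x *\<^sub>R (f x)\<^sup>2) + indicator \<Omega> x *\<^sub>R c)"
    using f i unfolding L2_on_def set_integrable_def
    by (intro Bochner_Integration.integrable_add integrable_mult_right) auto
  then have i2: "integrable lborel (\<lambda>x. indicator \<Omega> x *\<^sub>R (a * (f x)\<^sup>2 + c))"
    by (rule back_subst[where P="integrable lborel"]) (auto simp: fun_eq_iff indicator_def)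
  have "norm (indicator \<Omega> x *\<^sub>R (u x)\<^sup>2) \<le> norm (indicator \<Omega> x *\<^sub>R (a * (f x)\<^sup>2 + c))"
    for x
  proof (cases "x \<in> \<Omega>")
    case True
    then have "(u x)\<^sup>2 \<le> \<bar>a * (f x)\<^sup>2 + c\<bar>"
      using le abs_ge_self order_trans by meson
    then show ?thesis using True by simp
  qed simp
  then have "set_integrable lborel \<Omega> (\<lambda>x. (u x)\<^sup>2)"
    unfolding set_integrable_def by (intro Bochner_Integration.integrable_bound[OF i2 m2]) auto
  then show ?thesis unfolding L2_on_def using m by blast
qed

lemma L2_on_mult_bounded:
  fixes \<Omega> :: "(complex^'n) set"
  assumes "open \<Omega>" "continuous_on \<Omega> a" "\<forall>x\<in>\<Omega>. \<bar>a x\<bar> \<le> 1" "L2_on \<Omega> g"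
  shows "L2_on \<Omega> (\<lambda>x. a x * g x)"
proof (rule L2_on_boundedI[where a=1 and c=0])
  have "(\<lambda>x. indicator \<Omega> x *\<^sub>R a x) \<in> borel_measurable lborel"
    using set_borel_measurable_continuous_on_open[OF assms(1,2)] unfolding set_borel_measurable_def .
  moreover have "(\<lambda>x. indicator \<Omega> x *\<^sub>R g x) \<in> borel_measurable lborel"
    using assms(4) unfolding L2_on_def set_borel_measurable_def by blast
  ultimately have "(\<lambda>x. (indicator \<Omega> x *\<^sub>R a x) * (indicator \<Omega> x *\<^sub>R g x)) \<in> borel_measurable lborel"
    by (rule borel_measurable_times)
  moreover have "(\<lambda>x. (indicator \<Omega> x *\<^sub>R a x) * (indicator \<Omega> x *\<^sub>R g x)) =
      (\<lambda>x. indicator \<Omega> x *\<^sub>R (a x * g x))"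
    by (auto simp: indicator_def)
  ultimately show "set_borel_measurable lborel \<Omega> (\<lambda>x. a x * g x)"
    unfolding set_borel_measurable_def by simp
  show "\<forall>x\<in>\<Omega>. (a x * g x)\<^sup>2 \<le> 1 * (g x)\<^sup>2 + 0"
  proof
    fix x assume "x \<in> \<Omega>"
    then have "(a x)\<^sup>2 \<le> 1" using assms(3) by (simp add: abs_square_le_1)
    then show "(a x * g x)\<^sup>2 \<le> 1 * (g x)\<^sup>2 + 0"
      by (simp add: power_mult_distrib mult_left_le_one_le)
  qed
qed (use assms(4) in \<open>auto simp: set_integrable_def\<close>)

lemma L2_on_of_abs_le:
  fixes \<Omega> :: "(complex^'n) set"
  assumes \<Omega>: "open \<Omega>" "bounded \<Omega>" and u: "continuous_on \<Omega> u" and f: "L2_on \<Omega> f"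
    and le: "\<forall>x\<in>\<Omega>. \<bar>u x\<bar> \<le> \<bar>f x\<bar> + e"
  shows "L2_on \<Omega> u"
proof (rule L2_on_boundedI[OF set_borel_measurable_continuous_on_open[OF \<Omega>(1) u] f])
  have "integrable lborel (\<lambda>x. indicator \<Omega> x * (2 * e\<^sup>2) :: real)"
    using \<Omega> emeasure_bounded_finite[OF \<Omega>(2)]
    by (intro integrable_mult_left integrable_real_indicator) auto
  then show "set_integrable lborel \<Omega> (\<lambda>x. 2 * e\<^sup>2)"
    unfolding set_integrable_def by simp
  show "\<forall>x\<in>\<Omega>. (u x)\<^sup>2 \<le> 2 * (f x)\<^sup>2 + 2 * e\<^sup>2"
  proof
    fix x assume "x \<in> \<Omega>"
    then have "\<bar>u x\<bar> \<le> \<bar>\<bar>f x\<bar> + e\<bar>"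
      using le abs_ge_self order_trans by meson
    then have "(u x)\<^sup>2 \<le> (\<bar>f x\<bar> + e)\<^sup>2"
      by (simp only: abs_le_square_iff)
    also have "\<dots> \<le> 2 * (f x)\<^sup>2 + 2 * e\<^sup>2"
      using sum_squares_ge_zero[of "\<bar>f x\<bar> - e" 0] by (simp add: power2_eq_square algebra_simps)
    finally show "(u x)\<^sup>2 \<le> 2 * (f x)\<^sup>2 + 2 * e\<^sup>2" .
  qed
qed

lemma W12_grad_of_pd_eq_mult:
  fixes \<Omega> :: "(complex^'n) set"
  assumes \<Omega>: "open \<Omega>" and f: "Ck_on 1 \<Omega> f" and u: "Ck_on 1 \<Omega> u"
    and a: "smooth_on \<Omega> a" "\<forall>x\<in>\<Omega>. \<bar>a x\<bar> \<le> 1"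
    and du: "\<forall>x\<in>\<Omega>. \<forall>v. pd u v x = a x * pd f v x"
    and u2: "L2_on \<Omega> u" and G: "W12_grad \<Omega> f G"
  shows "W12_grad \<Omega> u (\<lambda>v x. a x * G v x)"
proof -
  have \<Omega>_sets: "\<Omega> \<in> sets lborel" using \<Omega> by simp
  have "weak_deriv \<Omega> u v (\<lambda>x. a x * G v x)" if v: "v \<in> Basis" for v
    unfolding weak_deriv_def
  proof (intro allI impI)
    fix \<phi> assume \<phi>: "test_fn \<Omega> \<phi>"
    define \<psi> where "\<psi> x = (if x \<in> \<Omega> then a x * \<phi> x else 0)" for x
    have \<psi>: "test_fn \<Omega> \<psi>" unfolding \<psi>_def by (rule test_fn_extend_mult[OF \<Omega> a(1) \<phi>])
    have "(LINT x:\<Omega>|lborel. u x * pd \<phi> v x) = - (LINT x:\<Omega>|lborel. pd u v x * \<phi> x)"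
      by (rule integration_by_parts_test_fn[OF \<Omega> u \<phi>])
    also have "(LINT x:\<Omega>|lborel. pd u v x * \<phi> x) = (LINT x:\<Omega>|lborel. pd f v x * \<psi> x)"
      by (rule set_lebesgue_integral_cong[OF \<Omega>_sets]) (use du in \<open>auto simp: \<psi>_def\<close>)
    also have "\<dots> = - (LINT x:\<Omega>|lborel. f x * pd \<psi> v x)"
      using integration_by_parts_test_fn[OF \<Omega> f \<psi>] by simp
    also have "(LINT x:\<Omega>|lborel. f x * pd \<psi> v x) = - (LINT x:\<Omega>|lborel. G v x * \<psi> x)"
      using G v \<psi> unfolding W12_grad_def weak_deriv_def by blast
    also have "(LINT x:\<Omega>|lborel. G v x * \<psi> x) = (LINT x:\<Omega>|lborel. (a x * G v x) * \<phi> x)"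
      by (rule set_lebesgue_integral_cong[OF \<Omega>_sets]) (auto simp: \<psi>_def)
    finally show "(LINT x:\<Omega>|lborel. u x * pd \<phi> v x) = - (LINT x:\<Omega>|lborel. (a x * G v x) * \<phi> x)"
      by simp
  qed
  moreover have "L2_on \<Omega> (\<lambda>x. a x * G v x)" if "v \<in> Basis" for v
    using L2_on_mult_bounded[OF \<Omega> smooth_on_imp_continuous_on[OF a(1)] a(2)] G that
    unfolding W12_grad_def by blast
  ultimately show ?thesis unfolding W12_grad_def using u2 by blast
qed

section \<open>Closed positive currents dominating df \<and> d^c f\<close>

lemma is_current11_split:
  fixes \<Omega> :: "(complex^'n) set"
  assumes "is_current11 \<Omega> T" "test_fn \<Omega> \<phi>" "test_fn \<Omega> \<psi>\<^sub>1" "test_fn \<Omega> \<psi>\<^sub>2"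
    "\<And>x. \<psi>\<^sub>1 x + \<psi>\<^sub>2 x = c * \<phi> x"
  shows "T j k \<psi>\<^sub>1 + T j k \<psi>\<^sub>2 = of_real c * T j k \<phi>"
proof -
  have "T j k (\<lambda>x. 1 * \<psi>\<^sub>1 x + 1 * \<psi>\<^sub>2 x) = of_real 1 * T j k \<psi>\<^sub>1 + of_real 1 * T j k \<psi>\<^sub>2"
    using assms(1,3,4) unfolding is_current11_def by blast
  moreover have "T j k (\<lambda>x. c * \<phi> x + 0 * \<phi> x) = of_real c * T j k \<phi> + of_real 0 * T j k \<phi>"
    using assms(1,2) unfolding is_current11_def by blast
  moreover have "(\<lambda>x. 1 * \<psi>\<^sub>1 x + 1 * \<psi>\<^sub>2 x) = (\<lambda>x. c * \<phi> x + 0 * \<phi> x)"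
    using assms(5) by auto
  ultimately show ?thesis by simp
qed

lemma ddc_current_mult:
  fixes \<Omega> :: "(complex^'n) set"
  assumes "open \<Omega>"
  shows "ddc_current \<Omega> (\<lambda>v x. a x * G v x) j k \<phi>
     = ddc_current \<Omega> G j k (\<lambda>x. if x \<in> \<Omega> then (a x * a x) * \<phi> x else 0)"
  unfolding ddc_current_def
  by (intro arg_cong[where f="\<lambda>z. z / of_real pi"] set_lebesgue_integral_cong)
    (use assms in \<open>auto simp: dz_f_def field_simps\<close>)

definition current11_form :: "'n current11 \<Rightarrow> (complex^'n \<Rightarrow> real) \<Rightarrow> ('n \<Rightarrow> complex) \<Rightarrow> complex"
  where "current11_form S \<phi> \<xi> = (\<Sum>j\<in>UNIV. \<Sum>k\<in>UNIV. S j k \<phi> * \<xi> j * cnj (\<xi> k))"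

lemma positive11_iff_current11_form:
  "positive11 \<Omega> S \<longleftrightarrow> (\<forall>\<phi> \<xi>. test_fn \<Omega> \<phi> \<longrightarrow> (\<forall>x. 0 \<le> \<phi> x) \<longrightarrow>
     Im (current11_form S \<phi> \<xi>) = 0 \<and> 0 \<le> Re (current11_form S \<phi> \<xi>))"
  unfolding positive11_def current11_form_def Let_def ..

lemma closed_positive11_scale:
  fixes \<Omega> :: "(complex^'n) set"
  assumes c: "0 \<le> c" and T: "closed_positive11 \<Omega> T"
  shows "closed_positive11 \<Omega> (\<lambda>j k \<phi>. of_real c * T j k \<phi>)"
proof -
  have T: "is_current11 \<Omega> T" "positive11 \<Omega> T" "closed11 \<Omega> T"
    using T unfolding closed_positive11_def by auto
  have "is_current11 \<Omega> (\<lambda>j k \<phi>. of_real c * T j k \<phi>)"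
    using T(1) unfolding is_current11_def by (simp add: algebra_simps)
  moreover have "current11_form (\<lambda>j k \<phi>. of_real c * T j k \<phi>) \<phi> \<xi> = of_real c * current11_form T \<phi> \<xi>"
    for \<phi> \<xi>
    by (simp add: current11_form_def sum_distrib_left mult.assoc)
  then have "positive11 \<Omega> (\<lambda>j k \<phi>. of_real c * T j k \<phi>)"
    using T(2) c unfolding positive11_iff_current11_form by simp
  moreover have "T_dz (\<lambda>j k \<phi>. of_real c * T j k \<phi>) j k l \<phi> = of_real c * T_dz T j k l \<phi>"
    and "T_dzbar (\<lambda>j k \<phi>. of_real c * T j k \<phi>) j k l \<phi> = of_real c * T_dzbar T j k l \<phi>"
    for j k l \<phi>
    unfolding T_dz_def T_dzbar_def by (simp_all add: algebra_simps)
  then have "closed11 \<Omega> (\<lambda>j k \<phi>. of_real c * T j k \<phi>)"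
    using T(3) unfolding closed11_def by simp
  ultimately show ?thesis unfolding closed_positive11_def by blast
qed

lemma mass11_scale:
  fixes \<Omega> :: "(complex^'n) set"
  assumes "0 \<le> c"
  shows "mass11 \<Omega> (\<lambda>j k \<phi>. of_real c * T j k \<phi>) = ennreal c * mass11 \<Omega> T"
proof -
  have "ennreal (\<Sum>j\<in>UNIV. Re (of_real c * T j j \<phi>)) = ennreal c * ennreal (\<Sum>j\<in>UNIV. Re (T j j \<phi>))"
    for \<phi>
    using assms by (simp add: sum_distrib_left[symmetric] ennreal_mult')
  then show ?thesis unfolding mass11_def
    by (simp add: SUP_mult_left_ennreal[symmetric] mult.left_commute)
qed

text \<open>Split l^2 \<phi> = (l^2 - a^2) \<phi> + a^2 \<phi>: test T against the first part and
  T - df \<and> d^c f against the second.\<close>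

lemma positive11_dominated_mult:
  fixes \<Omega> :: "(complex^'n) set"
  assumes \<Omega>: "open \<Omega>" and T: "is_current11 \<Omega> T" "positive11 \<Omega> T"
    and TG: "positive11 \<Omega> (\<lambda>j k \<phi>. T j k \<phi> - ddc_current \<Omega> G j k \<phi>)"
    and a: "smooth_on \<Omega> a" "\<forall>x\<in>\<Omega>. \<bar>a x\<bar> \<le> l"
  shows "positive11 \<Omega> (\<lambda>j k \<phi>. of_real (l\<^sup>2) * T j k \<phi> - ddc_current \<Omega> (\<lambda>v x. a x * G v x) j k \<phi>)"
  unfolding positive11_iff_current11_form
proof (intro allI impI)
  fix \<phi> :: "complex^'n \<Rightarrow> real" and \<xi> :: "'n \<Rightarrow> complex"
  assume \<phi>: "test_fn \<Omega> \<phi>" and \<phi>0: "\<forall>x. 0 \<le> \<phi> x"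
  define \<psi>\<^sub>1 where "\<psi>\<^sub>1 x = (if x \<in> \<Omega> then (l\<^sup>2 - a x * a x) * \<phi> x else 0)" for x
  define \<psi>\<^sub>2 where "\<psi>\<^sub>2 x = (if x \<in> \<Omega> then (a x * a x) * \<phi> x else 0)" for x
  have "smooth_on \<Omega> (\<lambda>x. l\<^sup>2 + (-1) * (a x * a x))"
    by (intro smooth_on_add[OF \<Omega>] smooth_on_mult[OF \<Omega>] smooth_on_const a(1))
  then have \<psi>\<^sub>1: "test_fn \<Omega> \<psi>\<^sub>1"
    unfolding \<psi>\<^sub>1_def using test_fn_extend_mult[OF \<Omega> _ \<phi>] by simp
  have \<psi>\<^sub>2: "test_fn \<Omega> \<psi>\<^sub>2"
    unfolding \<psi>\<^sub>2_def by (intro test_fn_extend_mult[OF \<Omega> _ \<phi>] smooth_on_mult[OF \<Omega>] a(1))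
  have "a x * a x \<le> l\<^sup>2" if "x \<in> \<Omega>" for x
    using a(2) that mult_mono[of "\<bar>a x\<bar>" l "\<bar>a x\<bar>" l] by (auto simp: power2_eq_square abs_mult[symmetric])
  then have "\<forall>x. 0 \<le> \<psi>\<^sub>1 x" using \<phi>0 by (simp add: \<psi>\<^sub>1_def)
  then have 1: "Im (current11_form T \<psi>\<^sub>1 \<xi>) = 0 \<and> 0 \<le> Re (current11_form T \<psi>\<^sub>1 \<xi>)"
    using T(2) \<psi>\<^sub>1 unfolding positive11_iff_current11_form by blast
  have "\<forall>x. 0 \<le> \<psi>\<^sub>2 x" using \<phi>0 by (simp add: \<psi>\<^sub>2_def)
  then have 2: "Im (current11_form (\<lambda>j k \<phi>. T j k \<phi> - ddc_current \<Omega> G j k \<phi>) \<psi>\<^sub>2 \<xi>) = 0 \<and>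
      0 \<le> Re (current11_form (\<lambda>j k \<phi>. T j k \<phi> - ddc_current \<Omega> G j k \<phi>) \<psi>\<^sub>2 \<xi>)"
    using TG \<psi>\<^sub>2 unfolding positive11_iff_current11_form by blast
  have "\<psi>\<^sub>1 x + \<psi>\<^sub>2 x = l\<^sup>2 * \<phi> x" for x
    using test_fn_vanishes_outside[OF \<phi>, of x] by (auto simp: \<psi>\<^sub>1_def \<psi>\<^sub>2_def algebra_simps)
  then have split: "of_real (l\<^sup>2) * T j k \<phi> = T j k \<psi>\<^sub>1 + T j k \<psi>\<^sub>2" for j k
    by (rule is_current11_split[OF T(1) \<phi> \<psi>\<^sub>1 \<psi>\<^sub>2, symmetric])
  have ddc: "ddc_current \<Omega> (\<lambda>v x. a x * G v x) j k \<phi> = ddc_current \<Omega> G j k \<psi>\<^sub>2" for j k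
    unfolding \<psi>\<^sub>2_def by (rule ddc_current_mult[OF \<Omega>])
  have "current11_form (\<lambda>j k \<phi>. of_real (l\<^sup>2) * T j k \<phi> - ddc_current \<Omega> (\<lambda>v x. a x * G v x) j k \<phi>) \<phi> \<xi>
      = current11_form T \<psi>\<^sub>1 \<xi> + current11_form (\<lambda>j k \<phi>. T j k \<phi> - ddc_current \<Omega> G j k \<phi>) \<psi>\<^sub>2 \<xi>"
    unfolding current11_form_def split ddc by (simp add: sum.distrib[symmetric] algebra_simps)
  with 1 2 show "Im (current11_form (\<lambda>j k \<phi>. of_real (l\<^sup>2) * T j k \<phi>
        - ddc_current \<Omega> (\<lambda>v x. a x * G v x) j k \<phi>) \<phi> \<xi>) = 0 \<and>
      0 \<le> Re (current11_form (\<lambda>j k \<phi>. of_real (l\<^sup>2) * T j k \<phi>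
        - ddc_current \<Omega> (\<lambda>v x. a x * G v x) j k \<phi>) \<phi> \<xi>)"
    by simp
qed

lemma admissible_T_of_pd_eq_mult:
  fixes \<Omega> :: "(complex^'n) set"
  assumes \<Omega>: "open \<Omega>" and f: "Ck_on 1 \<Omega> f" and u: "Ck_on 1 \<Omega> u"
    and a: "smooth_on \<Omega> a" "\<forall>x\<in>\<Omega>. \<bar>a x\<bar> \<le> l" and l: "l \<le> 1"
    and du: "\<forall>x\<in>\<Omega>. \<forall>v. pd u v x = a x * pd f v x" and u2: "L2_on \<Omega> u"
    and T: "T \<in> admissible_T \<Omega> f"
  shows "(\<lambda>j k \<phi>. of_real (l\<^sup>2) * T j k \<phi>) \<in> admissible_T \<Omega> u"
proof -
  have cp: "closed_positive11 \<Omega> T" and m: "mass11 \<Omega> T < \<infinity>" and "dominated_by \<Omega> f T"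
    using T unfolding admissible_T_def by auto
  then obtain G where G: "W12_grad \<Omega> f G"
    and TG: "positive11 \<Omega> (\<lambda>j k \<phi>. T j k \<phi> - ddc_current \<Omega> G j k \<phi>)"
    unfolding dominated_by_def by blast
  have "\<forall>x\<in>\<Omega>. \<bar>a x\<bar> \<le> 1" using a(2) l by force
  then have "W12_grad \<Omega> u (\<lambda>v x. a x * G v x)"
    by (rule W12_grad_of_pd_eq_mult[OF \<Omega> f u a(1) _ du u2 G])
  moreover have "positive11 \<Omega> (\<lambda>j k \<phi>. of_real (l\<^sup>2) * T j k \<phi> - ddc_current \<Omega> (\<lambda>v x. a x * G v x) j k \<phi>)"
    using cp by (intro positive11_dominated_mult[OF \<Omega> _ _ TG a]) (auto simp: closed_positive11_def)
  ultimately have "dominated_by \<Omega> u (\<lambda>j k \<phi>. of_real (l\<^sup>2) * T j k \<phi>)"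
    unfolding dominated_by_def by blast
  moreover have "closed_positive11 \<Omega> (\<lambda>j k \<phi>. of_real (l\<^sup>2) * T j k \<phi>)"
    by (rule closed_positive11_scale[OF zero_le_power2 cp])
  moreover have "mass11 \<Omega> (\<lambda>j k \<phi>. of_real (l\<^sup>2) * T j k \<phi>) < \<infinity>"
    using m mass11_scale[of "l\<^sup>2" \<Omega> T] by (simp add: ennreal_mult_less_top)
  ultimately show ?thesis unfolding admissible_T_def by blast
qed

definition star_seminorm :: "(complex^'n) set \<Rightarrow> (complex^'n \<Rightarrow> real) \<Rightarrow> ennreal" where
  "star_seminorm \<Omega> f = ennreal (sqrt (enn2real (INF T\<in>admissible_T \<Omega> f. mass11 \<Omega> T)))"

lemma star_norm_eq: "Wstar \<Omega> f \<Longrightarrow> star_norm \<Omega> f = L1norm \<Omega> f + star_seminorm \<Omega> f"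
  unfolding star_norm_def star_seminorm_def by simp

lemma INF_le_ennreal_mult_INF:
  fixes f :: "'a \<Rightarrow> ennreal" and g :: "'b \<Rightarrow> ennreal"
  assumes c: "0 < c" and le: "\<And>x. x \<in> A \<Longrightarrow> \<exists>y\<in>B. g y \<le> ennreal c * f x"
  shows "(INF y\<in>B. g y) \<le> ennreal c * (INF x\<in>A. f x)"
proof -
  have inv: "ennreal c * ennreal (1 / c) = 1" using c by (simp flip: ennreal_mult')
  have "ennreal (1 / c) * (INF y\<in>B. g y) \<le> f x" if x: "x \<in> A" for x
  proof -
    obtain y where "y \<in> B" "g y \<le> ennreal c * f x" using le[OF x] by blast
    then have "(INF y\<in>B. g y) \<le> ennreal c * f x" by (meson INF_lower order_trans)
    then have "ennreal (1 / c) * (INF y\<in>B. g y) \<le> ennreal (1 / c) * ennreal c * f x"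
      by (simp add: mult_left_mono mult.assoc)
    then show ?thesis using inv by (simp add: mult.commute)
  qed
  then have "ennreal (1 / c) * (INF y\<in>B. g y) \<le> (INF x\<in>A. f x)" by (rule INF_greatest)
  then have "ennreal c * (ennreal (1 / c) * (INF y\<in>B. g y)) \<le> ennreal c * (INF x\<in>A. f x)"
    by (rule mult_left_mono) simp
  then show ?thesis using inv by (simp add: mult.assoc[symmetric])
qed

lemma sqrt_enn2real_le_mult:
  assumes "M \<le> ennreal (l\<^sup>2) * N" "N < \<infinity>" "0 \<le> l"
  shows "ennreal (sqrt (enn2real M)) \<le> ennreal l * ennreal (sqrt (enn2real N))"
proof -
  have "enn2real M \<le> enn2real (ennreal (l\<^sup>2) * N)"
    using assms(1,2) by (intro enn2real_mono) (auto simp: ennreal_mult_less_top)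
  also have "\<dots> = l\<^sup>2 * enn2real N" by (simp add: enn2real_mult)
  finally have "sqrt (enn2real M) \<le> l * sqrt (enn2real N)"
    using assms(3) real_sqrt_le_mono by (fastforce simp: real_sqrt_mult)
  then show ?thesis using assms(3) by (simp add: ennreal_mult'[symmetric] ennreal_leI)
qed

lemma star_seminorm_le_of_pd_eq_mult:
  fixes \<Omega> :: "(complex^'n) set"
  assumes \<Omega>: "open \<Omega>" and f: "Ck_on 1 \<Omega> f" and u: "Ck_on 1 \<Omega> u"
    and a: "smooth_on \<Omega> a" "\<forall>x\<in>\<Omega>. \<bar>a x\<bar> \<le> l" and l: "0 < l" "l \<le> 1"
    and du: "\<forall>x\<in>\<Omega>. \<forall>v. pd u v x = a x * pd f v x" and u2: "L2_on \<Omega> u"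
    and W: "Wstar \<Omega> f"
  shows "Wstar \<Omega> u" and "star_seminorm \<Omega> u \<le> ennreal l * star_seminorm \<Omega> f"
proof -
  note adm = admissible_T_of_pd_eq_mult[OF \<Omega> f u a l(2) du u2]
  obtain T\<^sub>0 where T\<^sub>0: "T\<^sub>0 \<in> admissible_T \<Omega> f" using W unfolding Wstar_def by blast
  show "Wstar \<Omega> u"
    using adm[OF T\<^sub>0] unfolding Wstar_def W12_def admissible_T_def dominated_by_def by blast
  have "mass11 \<Omega> (\<lambda>j k \<phi>. of_real (l\<^sup>2) * T j k \<phi>) \<le> ennreal (l\<^sup>2) * mass11 \<Omega> T" for T
    using mass11_scale[of "l\<^sup>2" \<Omega> T] by simp
  then have "(INF T\<in>admissible_T \<Omega> u. mass11 \<Omega> T) \<le> ennreal (l\<^sup>2) * (INF T\<in>admissible_T \<Omega> f. mass11 \<Omega> T)"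
    using adm l(1) by (intro INF_le_ennreal_mult_INF) auto
  moreover have "(INF T\<in>admissible_T \<Omega> f. mass11 \<Omega> T) < \<infinity>"
    using T\<^sub>0 INF_lower[OF T\<^sub>0, of "mass11 \<Omega>"] unfolding admissible_T_def by auto
  ultimately show "star_seminorm \<Omega> u \<le> ennreal l * star_seminorm \<Omega> f"
    unfolding star_seminorm_def using l(1) by (intro sqrt_enn2real_le_mult) auto
qed
section \<open>Regularized positive and negative parts\<close>

text \<open>For s = 1 (resp. s = -1) and d \<rightarrow> 0 these tend to the positive (resp. negative) part of t.\<close>

definition regularized_part :: "real \<Rightarrow> real \<Rightarrow> real \<Rightarrow> real" where
  "regularized_part d s t = (s * t + sqrt (t\<^sup>2 + d\<^sup>2)) / 2"

definition regularized_part_deriv :: "real \<Rightarrow> real \<Rightarrow> real \<Rightarrow> real" where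
  "regularized_part_deriv d s t = (s + t / sqrt (t\<^sup>2 + d\<^sup>2)) / 2"

lemma regularized_part_diff: "regularized_part d 1 t - regularized_part d (-1) t = t"
  by (simp add: regularized_part_def field_simps)

lemma abs_le_sqrt_square_add: "\<bar>t\<bar> \<le> sqrt (t\<^sup>2 + d\<^sup>2)"
  using real_sqrt_le_mono[of "t\<^sup>2" "t\<^sup>2 + d\<^sup>2"] by simp

lemma regularized_part_nonneg:
  assumes "\<bar>s\<bar> \<le> 1"
  shows "0 \<le> regularized_part d s t"
proof -
  have "\<bar>s * t\<bar> \<le> \<bar>t\<bar>" using assms by (simp add: abs_mult mult_left_le_one_le)
  then have "0 \<le> s * t + sqrt (t\<^sup>2 + d\<^sup>2)"
    using abs_le_sqrt_square_add[of t d] abs_ge_minus_self[of "s * t"] by linarith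
  then show ?thesis unfolding regularized_part_def by simp
qed

lemma abs_regularized_part_le:
  assumes "\<bar>s\<bar> \<le> 1" "0 \<le> d"
  shows "\<bar>regularized_part d s t\<bar> \<le> \<bar>t\<bar> + d / 2"
proof -
  have "\<bar>s * t\<bar> \<le> \<bar>t\<bar>" using assms(1) by (simp add: abs_mult mult_left_le_one_le)
  then have "s * t \<le> \<bar>t\<bar>" by linarith
  moreover have "sqrt (t\<^sup>2 + d\<^sup>2) \<le> \<bar>t\<bar> + d"
    using assms(2) by (intro real_le_lsqrt) (auto simp: power2_eq_square algebra_simps)
  ultimately have "regularized_part d s t \<le> \<bar>t\<bar> + d / 2"
    unfolding regularized_part_def by simp
  then show ?thesis using regularized_part_nonneg[OF assms(1), of d t] by simp
qed

lemma abs_regularized_part_deriv_le: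
  assumes "\<bar>s\<bar> \<le> 1" "0 < d"
  shows "\<bar>regularized_part_deriv d s t\<bar> \<le> 1"
proof -
  have "0 < sqrt (t\<^sup>2 + d\<^sup>2)" using assms(2) by (simp add: add_nonneg_pos)
  then have "\<bar>t / sqrt (t\<^sup>2 + d\<^sup>2)\<bar> \<le> 1"
    using abs_le_sqrt_square_add[of t d] by (simp add: divide_le_eq)
  then have "\<bar>s + t / sqrt (t\<^sup>2 + d\<^sup>2)\<bar> \<le> 2"
    using assms(1) abs_triangle_ineq[of s "t / sqrt (t\<^sup>2 + d\<^sup>2)"] by linarith
  then show ?thesis unfolding regularized_part_deriv_def by simp
qed

lemma has_real_derivative_regularized_part:
  assumes "0 < d"
  shows "(regularized_part d s has_real_derivative regularized_part_deriv d s t) (at t)"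
proof -
  have pos: "0 < t\<^sup>2 + d\<^sup>2" using assms by (simp add: add_nonneg_pos)
  have square: "((\<lambda>t. t\<^sup>2 + d\<^sup>2) has_real_derivative 2 * t) (at t)"
    by (rule DERIV_cong[OF DERIV_add[OF DERIV_pow DERIV_const]]) simp
  have "((\<lambda>t. sqrt (t\<^sup>2 + d\<^sup>2)) has_real_derivative t / sqrt (t\<^sup>2 + d\<^sup>2)) (at t)"
    by (rule DERIV_cong[OF DERIV_chain2[OF DERIV_real_sqrt[OF pos] square]])
      (use pos in \<open>simp add: field_simps\<close>)
  then have "((\<lambda>t. s * t + sqrt (t\<^sup>2 + d\<^sup>2)) has_real_derivative s + t / sqrt (t\<^sup>2 + d\<^sup>2)) (at t)"
    by (rule DERIV_cong[OF DERIV_add[OF DERIV_cmult[OF DERIV_ident, where c=s]]]) simp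
  then show ?thesis
    unfolding regularized_part_def[abs_def] regularized_part_deriv_def by (rule DERIV_cdivide)
qed

lemma smooth_on_regularized_part:
  assumes \<Omega>: "open \<Omega>" and f: "smooth_on \<Omega> f" and d: "0 < d"
  shows "smooth_on \<Omega> (\<lambda>x. regularized_part d s (f x))"
    and "smooth_on \<Omega> (\<lambda>x. regularized_part_deriv d s (f x))"
proof -
  have pos: "0 < f x * f x + d * d" for x
    using d by (intro add_nonneg_pos) auto
  have "smooth_on \<Omega> (\<lambda>x. f x * f x + d * d)"
    by (intro smooth_on_add[OF \<Omega>] smooth_on_mult[OF \<Omega>] f smooth_on_const)
  then have r: "smooth_on \<Omega> (\<lambda>x. sqrt (f x * f x + d * d))"
    using pos by (intro smooth_on_sqrt[OF \<Omega>]) auto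
  have "smooth_on \<Omega> (\<lambda>x. (1/2) * (s * f x + sqrt (f x * f x + d * d)))"
    by (intro smooth_on_add[OF \<Omega>] smooth_on_mult[OF \<Omega>] f smooth_on_const r)
  then show "smooth_on \<Omega> (\<lambda>x. regularized_part d s (f x))"
    by (simp add: regularized_part_def power2_eq_square)
  have "\<forall>x\<in>\<Omega>. sqrt (f x * f x + d * d) \<noteq> 0"
    using pos by (metis less_irrefl real_sqrt_eq_zero_cancel_iff)
  then have "smooth_on \<Omega> (\<lambda>x. inverse (sqrt (f x * f x + d * d)))"
    by (rule smooth_on_inverse[OF \<Omega> r])
  then have "smooth_on \<Omega> (\<lambda>x. (1/2) * (s + f x * inverse (sqrt (f x * f x + d * d))))"
    by (intro smooth_on_add[OF \<Omega>] smooth_on_mult[OF \<Omega>] f smooth_on_const)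
  moreover have "(\<lambda>x. regularized_part_deriv d s (f x))
      = (\<lambda>x. (1/2) * (s + f x * inverse (sqrt (f x * f x + d * d))))"
    by (simp add: fun_eq_iff regularized_part_deriv_def power2_eq_square field_simps)
  ultimately show "smooth_on \<Omega> (\<lambda>x. regularized_part_deriv d s (f x))"
    by simp
qed

lemma L1norm_le_of_abs_le:
  fixes \<Omega> :: "(complex^'n) set"
  assumes \<Omega>: "open \<Omega>" "bounded \<Omega>" and f: "continuous_on \<Omega> f" and l: "0 \<le> l" and e: "0 \<le> e"
    and le: "\<forall>x\<in>\<Omega>. \<bar>u x\<bar> \<le> l * (\<bar>f x\<bar> + e)"
  shows "L1norm \<Omega> u \<le> ennreal l * (L1norm \<Omega> f + ennreal (e * measure lborel \<Omega>))"
proof -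
  have \<Omega>_sets: "\<Omega> \<in> sets lborel" using \<Omega>(1) by simp
  have "(\<lambda>x. indicator \<Omega> x *\<^sub>R f x) \<in> borel_measurable lborel"
    using set_borel_measurable_continuous_on_open[OF \<Omega>(1) f] unfolding set_borel_measurable_def .
  moreover have "(\<lambda>x. ennreal \<bar>f x\<bar> * indicator \<Omega> x) = (\<lambda>x. ennreal \<bar>indicator \<Omega> x *\<^sub>R f x\<bar>)"
    by (auto simp: indicator_def fun_eq_iff)
  ultimately have f_meas: "(\<lambda>x. ennreal \<bar>f x\<bar> * indicator \<Omega> x) \<in> borel_measurable lborel"
    by simp
  have e_meas: "(\<lambda>x. ennreal e * indicator \<Omega> x) \<in> borel_measurable lborel"
    using \<Omega>_sets by measurable
  have "L1norm \<Omega> u \<le> (\<integral>\<^sup>+ x. ennreal l * (ennreal \<bar>f x\<bar> * indicator \<Omega> x + ennreal e * indicator \<Omega> x) \<partial>lborel)"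
    unfolding L1norm_def
  proof (rule nn_integral_mono)
    fix x
    show "ennreal \<bar>u x\<bar> * indicator \<Omega> x
        \<le> ennreal l * (ennreal \<bar>f x\<bar> * indicator \<Omega> x + ennreal e * indicator \<Omega> x)"
    proof (cases "x \<in> \<Omega>")
      case True
      then have "ennreal \<bar>u x\<bar> \<le> ennreal (l * (\<bar>f x\<bar> + e))" using le by (intro ennreal_leI) auto
      also have "\<dots> = ennreal l * (ennreal \<bar>f x\<bar> + ennreal e)"
        using l e by (simp add: ennreal_mult')
      finally show ?thesis using True by simp
    qed simp
  qed
  also have "\<dots> = ennreal l * ((\<integral>\<^sup>+ x. ennreal \<bar>f x\<bar> * indicator \<Omega> x \<partial>lborel)
      + (\<integral>\<^sup>+ x. ennreal e * indicator \<Omega> x \<partial>lborel))"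
    using f_meas e_meas by (simp add: nn_integral_cmult nn_integral_add)
  also have "(\<integral>\<^sup>+ x. ennreal e * indicator \<Omega> x \<partial>lborel) = ennreal (e * measure lborel \<Omega>)"
    using nn_integral_cmult_indicator[OF \<Omega>_sets, of "ennreal e"] emeasure_bounded_finite[OF \<Omega>(2)] e
    by (simp add: emeasure_eq_ennreal_measure ennreal_mult')
  finally show ?thesis unfolding L1norm_def .
qed

lemma pd_scaled_regularized_part:
  assumes "f differentiable (at x)" "0 < d"
  shows "pd (\<lambda>y. l * regularized_part d s (f y)) v x = l * regularized_part_deriv d s (f x) * pd f v x"
  by (intro pd_compose_real[where g="\<lambda>t. l * regularized_part d s t"] DERIV_cmult
      has_real_derivative_regularized_part assms)

lemma L1norm_scaled_regularized_part_le:
  fixes \<Omega> :: "(complex^'n) set" and f :: "complex^'n \<Rightarrow> real"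
  assumes \<Omega>: "open \<Omega>" "bounded \<Omega>" and f: "continuous_on \<Omega> f"
    and d: "0 < d" "d / 2 * measure lborel \<Omega> \<le> \<eta>" and s: "\<bar>s\<bar> \<le> 1" and l: "0 \<le> l"
  shows "L1norm \<Omega> (\<lambda>x. l * regularized_part d s (f x)) \<le> ennreal l * (L1norm \<Omega> f + ennreal \<eta>)"
proof -
  have "\<forall>x\<in>\<Omega>. \<bar>l * regularized_part d s (f x)\<bar> \<le> l * (\<bar>f x\<bar> + d / 2)"
    using abs_regularized_part_le[OF s] d(1) l by (simp add: abs_mult mult_left_mono)
  then have "L1norm \<Omega> (\<lambda>x. l * regularized_part d s (f x))
      \<le> ennreal l * (L1norm \<Omega> f + ennreal (d / 2 * measure lborel \<Omega>))"
    by (rule L1norm_le_of_abs_le[OF \<Omega> f l, rotated]) (use d(1) in simp)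
  also have "\<dots> \<le> ennreal l * (L1norm \<Omega> f + ennreal \<eta>)"
    using d(2) by (intro mult_left_mono add_left_mono ennreal_leI) auto
  finally show ?thesis .
qed

lemma star_norm_scaled_regularized_part_le:
  fixes \<Omega> :: "(complex^'n) set" and f :: "complex^'n \<Rightarrow> real"
  assumes \<Omega>: "open \<Omega>" "bounded \<Omega>" and f: "smooth_on \<Omega> f"
    and d: "0 < d" "d / 2 * measure lborel \<Omega> \<le> \<eta>" and s: "\<bar>s\<bar> \<le> 1" and l: "0 < l" "l \<le> 1"
  shows "star_norm \<Omega> (\<lambda>x. l * regularized_part d s (f x)) \<le> ennreal l * (star_norm \<Omega> f + ennreal \<eta>)"
proof (cases "Wstar \<Omega> f")
  case True
  define u where "u x = l * regularized_part d s (f x)" for x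
  define a where "a x = l * regularized_part_deriv d s (f x)" for x
  have u_smooth: "smooth_on \<Omega> u"
    unfolding u_def by (intro smooth_on_mult[OF \<Omega>(1)] smooth_on_const smooth_on_regularized_part[OF \<Omega>(1) f d(1)])
  have a_smooth: "smooth_on \<Omega> a"
    unfolding a_def by (intro smooth_on_mult[OF \<Omega>(1)] smooth_on_const smooth_on_regularized_part[OF \<Omega>(1) f d(1)])
  have a_le: "\<forall>x\<in>\<Omega>. \<bar>a x\<bar> \<le> l"
    using abs_regularized_part_deriv_le[OF s d(1)] l by (simp add: a_def abs_mult mult_left_le_one_le)
  have du: "\<forall>x\<in>\<Omega>. \<forall>v. pd u v x = a x * pd f v x"
  proof (intro ballI allI)
    fix x v assume "x \<in> \<Omega>"
    then have "f differentiable (at x)" using smooth_on_imp_Ck_on[OF f, of 1] by simp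
    then show "pd u v x = a x * pd f v x"
      unfolding u_def[abs_def] a_def by (rule pd_scaled_regularized_part[OF _ d(1)])
  qed
  have "\<bar>u x\<bar> \<le> \<bar>f x\<bar> + d / 2" for x
  proof -
    have "\<bar>u x\<bar> = l * \<bar>regularized_part d s (f x)\<bar>" using l by (simp add: u_def abs_mult)
    also have "\<dots> \<le> \<bar>regularized_part d s (f x)\<bar>" using l by (intro mult_left_le_one_le) auto
    also have "\<dots> \<le> \<bar>f x\<bar> + d / 2" using abs_regularized_part_le[OF s] d(1) by simp
    finally show ?thesis .
  qed
  moreover have "L2_on \<Omega> f"
    using True unfolding Wstar_def W12_def W12_grad_def by blast
  ultimately have "L2_on \<Omega> u"
    using L2_on_of_abs_le[OF \<Omega> smooth_on_imp_continuous_on[OF u_smooth]] by blast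
  note S = star_seminorm_le_of_pd_eq_mult[OF \<Omega>(1) smooth_on_imp_Ck_on[OF f]
      smooth_on_imp_Ck_on[OF u_smooth] a_smooth a_le l du this True]
  have "star_norm \<Omega> u = L1norm \<Omega> u + star_seminorm \<Omega> u" by (rule star_norm_eq[OF S(1)])
  also have "\<dots> \<le> ennreal l * (L1norm \<Omega> f + ennreal \<eta>) + ennreal l * star_seminorm \<Omega> f"
    using L1norm_scaled_regularized_part_le[OF \<Omega> smooth_on_imp_continuous_on[OF f] d s] l S(2)
    unfolding u_def by (intro add_mono) auto
  also have "\<dots> = ennreal l * (star_norm \<Omega> f + ennreal \<eta>)"
    by (simp add: star_norm_eq[OF True] algebra_simps)
  finally show ?thesis unfolding u_def .
next
  case False
  then show ?thesis using l by (simp add: star_norm_def ennreal_mult_top)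
qed

lemma exists_regularization_width:
  fixes \<Omega> :: "'a::euclidean_space set"
  assumes "0 < \<eta>"
  shows "\<exists>d>0. d / 2 * measure lborel \<Omega> \<le> \<eta>"
proof -
  define m where "m = measure lborel \<Omega>"
  have m: "0 \<le> m" unfolding m_def by simp
  define d where "d = \<eta> / (m + 1)"
  have "0 < d" using assms m unfolding d_def by simp
  moreover have "d / 2 * m = \<eta> * (m / (2 * (m + 1)))"
    unfolding d_def using m by (simp add: field_simps)
  moreover have "\<eta> * (m / (2 * (m + 1))) \<le> \<eta> * 1"
    using m assms by (intro mult_left_mono) (auto simp: field_simps)
  ultimately have "d / 2 * m \<le> \<eta>" by linarith
  with \<open>0 < d\<close> show ?thesis unfolding m_def by blast
qed

lemma smooth_nonneg_decomposition:
  fixes \<Omega> :: "(complex^'n) set" and f :: "complex^'n \<Rightarrow> real"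
  assumes \<Omega>: "open \<Omega>" "bounded \<Omega>" and f: "smooth_on \<Omega> f" and \<epsilon>: "\<epsilon> > 0"
  shows "\<exists>fp fm :: complex^'n \<Rightarrow> real.
           smooth_on \<Omega> fp \<and> smooth_on \<Omega> fm \<and>
           (\<forall>x\<in>\<Omega>. 0 \<le> fp x \<and> 0 \<le> fm x \<and> f x = fp x - fm x) \<and>
           L1norm \<Omega> fp \<le> L1norm \<Omega> f + ennreal \<epsilon> \<and>
           L1norm \<Omega> fm \<le> L1norm \<Omega> f + ennreal \<epsilon> \<and>
           star_norm \<Omega> fp \<le> star_norm \<Omega> f + ennreal \<epsilon> \<and>
           star_norm \<Omega> fm \<le> star_norm \<Omega> f + ennreal \<epsilon>"
proof -
  obtain d where d: "0 < d" "d / 2 * measure lborel \<Omega> \<le> \<epsilon>"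
    using exists_regularization_width[OF \<epsilon>] by blast
  note L1 = L1norm_scaled_regularized_part_le[OF \<Omega> smooth_on_imp_continuous_on[OF f] d _ zero_le_one]
  note star = star_norm_scaled_regularized_part_le[OF \<Omega> f d _ zero_less_one order.refl]
  show ?thesis
  proof (intro exI conjI ballI)
    show "smooth_on \<Omega> (\<lambda>x. regularized_part d 1 (f x))" "smooth_on \<Omega> (\<lambda>x. regularized_part d (-1) (f x))"
      by (rule smooth_on_regularized_part[OF \<Omega>(1) f d(1)])+
    show "0 \<le> regularized_part d 1 (f x)" "0 \<le> regularized_part d (-1) (f x)" for x
      by (simp_all add: regularized_part_nonneg)
    show "f x = regularized_part d 1 (f x) - regularized_part d (-1) (f x)" for x
      by (simp add: regularized_part_diff)
  qed (use L1[of 1] L1[of "-1"] star[of 1] star[of "-1"] in simp_all)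
qed

section \<open>Holder continuity is inherited by smaller measures\<close>

lemma set_integrable_compact_support_in:
  fixes \<Omega> :: "(complex^'n) set" and g :: "complex^'n \<Rightarrow> real"
  assumes \<nu>: "sets \<nu> = sets borel" "finite_measure \<nu>" "compact_support_in \<Omega> \<nu>"
    and \<Omega>: "open \<Omega>" and g: "continuous_on \<Omega> g"
  shows "set_integrable \<nu> \<Omega> g"
proof -
  obtain K where K: "compact K" "K \<subseteq> \<Omega>" "emeasure \<nu> (space \<nu> - K) = 0"
    using \<nu>(3) unfolding compact_support_in_def by blast
  obtain B where B: "\<And>x. x \<in> K \<Longrightarrow> \<bar>g x\<bar> \<le> B"
    using compact_imp_bounded[OF compact_continuous_image[OF continuous_on_subset[OF g K(2)] K(1)]]
    unfolding bounded_iff by auto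
  have space: "space \<nu> = UNIV" using sets_eq_imp_space_eq[OF \<nu>(1)] by simp
  have "(\<lambda>x. indicator \<Omega> x *\<^sub>R g x) \<in> borel_measurable \<nu>"
    using borel_measurable_continuous_on_indicator[OF _ g] \<Omega>
    by (subst measurable_cong_sets[OF \<nu>(1) refl]) auto
  moreover have "AE x in \<nu>. x \<in> K"
    using K(1,3) \<nu>(1) space by (intro AE_I[where N="space \<nu> - K"]) (auto simp: compact_imp_closed)
  then have "AE x in \<nu>. norm (indicator \<Omega> x *\<^sub>R g x) \<le> norm B"
    by eventually_elim (use B in \<open>force simp: indicator_def\<close>)
  ultimately show ?thesis unfolding set_integrable_def
    by (intro Bochner_Integration.integrable_bound[OF finite_measure.integrable_const[OF \<nu>(2)]])
qed

lemma integral_mono_measure_nonneg: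
  fixes h :: "'a \<Rightarrow> real"
  assumes s: "sets \<mu> = sets \<mu>'" and i: "integrable \<mu> h" "integrable \<mu>' h" and h: "\<And>x. 0 \<le> h x"
    and le: "\<forall>A\<in>sets \<mu>. emeasure \<mu> A \<le> emeasure \<mu>' A"
  shows "integral\<^sup>L \<mu> h \<le> integral\<^sup>L \<mu>' h"
proof -
  have "\<mu> \<le> \<mu>'" using le s by (simp add: le_measure)
  then have "(\<integral>\<^sup>+ x. ennreal (h x) \<partial>\<mu>) \<le> (\<integral>\<^sup>+ x. ennreal (h x) \<partial>\<mu>')"
    by (rule nn_integral_mono_measure[OF s])
  then show ?thesis
    using nn_integral_eq_integral[OF i(1)] nn_integral_eq_integral[OF i(2)] h
    by (simp add: ennreal_le_iff)
qed

lemma set_integral_mono_measure: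
  fixes \<Omega> :: "(complex^'n) set" and u :: "complex^'n \<Rightarrow> real"
  assumes \<Omega>: "open \<Omega>"
    and \<mu>: "sets \<mu> = sets borel" "finite_measure \<mu>" "compact_support_in \<Omega> \<mu>"
    and \<mu>': "sets \<mu>' = sets borel" "finite_measure \<mu>'" "compact_support_in \<Omega> \<mu>'"
    and le: "\<forall>A\<in>sets borel. emeasure \<mu> A \<le> emeasure \<mu>' A"
    and u: "continuous_on \<Omega> u" "\<And>x. 0 \<le> u x"
  shows "0 \<le> (LINT x:\<Omega>|\<mu>. u x)" and "(LINT x:\<Omega>|\<mu>. u x) \<le> (LINT x:\<Omega>|\<mu>'. u x)"
proof -
  show "0 \<le> (LINT x:\<Omega>|\<mu>. u x)"
    unfolding set_lebesgue_integral_def using u(2) by simp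
  show "(LINT x:\<Omega>|\<mu>. u x) \<le> (LINT x:\<Omega>|\<mu>'. u x)"
    unfolding set_lebesgue_integral_def
    using set_integrable_compact_support_in[OF \<mu> \<Omega> u(1)]
      set_integrable_compact_support_in[OF \<mu>' \<Omega> u(1)] \<mu>(1) \<mu>'(1) le u(2)
    by (intro integral_mono_measure_nonneg) (auto simp: set_integrable_def)
qed

lemma rescaled_regularized_part_norms:
  fixes \<Omega> :: "(complex^'n) set" and f :: "complex^'n \<Rightarrow> real"
  assumes \<Omega>: "open \<Omega>" "bounded \<Omega>" and f: "smooth_on \<Omega> f" "star_norm \<Omega> f \<le> 1"
    and \<eta>: "0 < \<eta>" and d: "0 < d" "d / 2 * measure lborel \<Omega> \<le> \<eta>" and s: "\<bar>s\<bar> \<le> 1"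
  defines "u \<equiv> \<lambda>x. inverse (1 + \<eta>) * regularized_part d s (f x)"
  shows "star_norm \<Omega> u \<le> 1" and "enn2real (L1norm \<Omega> u) \<le> enn2real (L1norm \<Omega> f) + \<eta>"
proof -
  define l where "l = inverse (1 + \<eta>)"
  have l: "0 < l" "l \<le> 1" "l * (1 + \<eta>) = 1" using \<eta> by (auto simp: l_def field_simps)
  have "star_norm \<Omega> u \<le> ennreal l * (star_norm \<Omega> f + ennreal \<eta>)"
    unfolding u_def l_def[symmetric] by (rule star_norm_scaled_regularized_part_le[OF \<Omega> f(1) d s l(1,2)])
  also have "\<dots> \<le> ennreal l * (1 + ennreal \<eta>)"
    using f(2) by (intro mult_left_mono add_right_mono) auto
  also have "\<dots> = ennreal (l * (1 + \<eta>))" using l(1) \<eta> by (simp add: ennreal_mult)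
  finally show "star_norm \<Omega> u \<le> 1" using l(3) by simp
  have W: "Wstar \<Omega> f" using f(2) by (auto simp: star_norm_def top_unique split: if_splits)
  define L where "L = enn2real (L1norm \<Omega> f)"
  have "L1norm \<Omega> f \<le> 1"
    using f(2) star_norm_eq[OF W] by (metis add_increasing2 le_iff_add order_trans zero_le)
  then have L: "L1norm \<Omega> f = ennreal L" "0 \<le> L"
    unfolding L_def by (auto simp: ennreal_enn2real_if top_unique)
  have "L1norm \<Omega> u \<le> ennreal l * (L1norm \<Omega> f + ennreal \<eta>)"
    unfolding u_def l_def[symmetric]
    by (rule L1norm_scaled_regularized_part_le[OF \<Omega> smooth_on_imp_continuous_on[OF f(1)] d s])
      (use l in simp)
  also have "\<dots> = ennreal (l * (L + \<eta>))" using l L \<eta> by (simp add: ennreal_mult)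
  finally have "enn2real (L1norm \<Omega> u) \<le> l * (L + \<eta>)"
    using l L \<eta> by (simp add: enn2real_leI)
  also have "\<dots> \<le> L + \<eta>" using l L \<eta> by (simp add: mult_left_le_one_le)
  finally show "enn2real (L1norm \<Omega> u) \<le> enn2real (L1norm \<Omega> f) + \<eta>" unfolding L_def .
qed

lemma Wstar_Holder_approx:
  fixes \<Omega> :: "(complex^'n) set" and f :: "complex^'n \<Rightarrow> real"
  assumes \<Omega>: "open \<Omega>" "bounded \<Omega>"
    and \<mu>: "sets \<mu> = sets borel" "finite_measure \<mu>" "compact_support_in \<Omega> \<mu>"
    and \<mu>': "sets \<mu>' = sets borel" "finite_measure \<mu>'" "compact_support_in \<Omega> \<mu>'"
    and le: "\<forall>A\<in>sets borel. emeasure \<mu> A \<le> emeasure \<mu>' A"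
    and c: "0 \<le> c" "0 \<le> \<alpha>"
    and Hol: "\<And>g. smooth_on \<Omega> g \<Longrightarrow> star_norm \<Omega> g \<le> 1 \<Longrightarrow>
        \<bar>LINT x:\<Omega>|\<mu>'. g x\<bar> \<le> c * enn2real (L1norm \<Omega> g) powr \<alpha>"
    and f: "smooth_on \<Omega> f" "star_norm \<Omega> f \<le> 1" and \<eta>: "0 < \<eta>"
  shows "\<bar>LINT x:\<Omega>|\<mu>. f x\<bar> \<le> (1 + \<eta>) * (c * (enn2real (L1norm \<Omega> f) + \<eta>) powr \<alpha>)"
proof -
  obtain d where d: "0 < d" "d / 2 * measure lborel \<Omega> \<le> \<eta>"
    using exists_regularization_width[OF \<eta>] by blast
  define L where "L = enn2real (L1norm \<Omega> f)"
  define u where "u s x = inverse (1 + \<eta>) * regularized_part d s (f x)" for s x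
  have smooth: "smooth_on \<Omega> (u s)" for s
    unfolding u_def by (intro smooth_on_mult[OF \<Omega>(1)] smooth_on_const smooth_on_regularized_part[OF \<Omega>(1) f(1) d(1)])
  have bound: "0 \<le> (LINT x:\<Omega>|\<mu>. u s x) \<and> (LINT x:\<Omega>|\<mu>. u s x) \<le> c * (L + \<eta>) powr \<alpha>"
    if s: "\<bar>s\<bar> \<le> 1" for s
  proof -
    note norms = rescaled_regularized_part_norms[OF \<Omega> f \<eta> d s, folded u_def L_def]
    have "0 \<le> u s x" for x
      using regularized_part_nonneg[OF s] \<eta> by (simp add: u_def)
    note mono = set_integral_mono_measure[OF \<Omega>(1) \<mu> \<mu>' le smooth_on_imp_continuous_on[OF smooth] this]
    have "c * enn2real (L1norm \<Omega> (u s)) powr \<alpha> \<le> c * (L + \<eta>) powr \<alpha>"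
      using c norms(2) by (intro mult_left_mono powr_mono2) auto
    then show ?thesis using Hol[OF smooth norms(1)] mono by linarith
  qed
  have "f x = (1 + \<eta>) * (u 1 x - u (-1) x)" for x
  proof -
    have "u 1 x - u (-1) x = inverse (1 + \<eta>) * f x"
      using regularized_part_diff[of d "f x"] by (simp add: u_def flip: right_diff_distrib)
    then show ?thesis using \<eta> by (simp add: mult.assoc[symmetric])
  qed
  then have "(LINT x:\<Omega>|\<mu>. f x) = (LINT x:\<Omega>|\<mu>. (1 + \<eta>) * (u 1 x - u (-1) x))"
    by (simp only:)
  also have "\<dots> = (1 + \<eta>) * ((LINT x:\<Omega>|\<mu>. u 1 x) - (LINT x:\<Omega>|\<mu>. u (-1) x))"
    using set_integrable_compact_support_in[OF \<mu> \<Omega>(1) smooth_on_imp_continuous_on[OF smooth]] by simp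
  finally show ?thesis
    using bound[of 1] bound[of "-1"] \<eta> unfolding L_def by (simp add: abs_mult abs_le_iff)
qed

lemma Wstar_Holder_mono:
  fixes \<Omega> :: "(complex^'n) set"
  assumes \<Omega>: "open \<Omega>" "bounded \<Omega>"
    and \<mu>: "sets \<mu> = sets borel" "finite_measure \<mu>" "compact_support_in \<Omega> \<mu>"
    and \<mu>': "sets \<mu>' = sets borel" "finite_measure \<mu>'" "compact_support_in \<Omega> \<mu>'"
    and le: "\<forall>A\<in>sets borel. emeasure \<mu> A \<le> emeasure \<mu>' A"
    and H: "Wstar_Holder \<Omega> \<mu>'"
  shows "Wstar_Holder \<Omega> \<mu>"
proof -
  obtain c \<alpha> where c: "c > 0" "\<alpha> > 0" and Hol: "\<forall>g. smooth_on \<Omega> g \<and> star_norm \<Omega> g \<le> 1 \<longrightarrow>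
      \<bar>LINT x:\<Omega>|\<mu>'. g x\<bar> \<le> c * enn2real (L1norm \<Omega> g) powr \<alpha>"
    using H unfolding Wstar_Holder_def by blast
  have "\<bar>LINT x:\<Omega>|\<mu>. f x\<bar> \<le> c * enn2real (L1norm \<Omega> f) powr \<alpha>"
    if f: "smooth_on \<Omega> f" "star_norm \<Omega> f \<le> 1" for f
  proof -
    let ?L = "enn2real (L1norm \<Omega> f)"
    have "((\<lambda>\<eta>. (1 + \<eta>) * (c * (?L + \<eta>) powr \<alpha>)) \<longlongrightarrow> (1 + 0) * (c * (?L + 0) powr \<alpha>)) (at_right 0)"
      using c by (intro tendsto_intros) (auto intro: eventually_at_rightI[of 0 1])
    moreover have "\<forall>\<^sub>F \<eta> in at_right 0. \<bar>LINT x:\<Omega>|\<mu>. f x\<bar> \<le> (1 + \<eta>) * (c * (?L + \<eta>) powr \<alpha>)"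
      using eventually_at_right_less
      by eventually_elim (use c Hol f in \<open>auto intro!: Wstar_Holder_approx[OF \<Omega> \<mu> \<mu>' le]\<close>)
    ultimately show ?thesis
      by (intro tendsto_le[OF trivial_limit_at_right_real _ tendsto_const]) simp_all
  qed
  then show ?thesis unfolding Wstar_Holder_def using c by blast
qed

theorem lemma2p5:
  fixes \<Omega> :: "(complex^'n) set"
  assumes "open \<Omega>" and "connected \<Omega>" and "\<Omega> \<noteq> {}" and "bounded \<Omega>"
  shows "(\<forall>(f::complex^'n \<Rightarrow> real) (\<epsilon>::real). smooth_on \<Omega> f \<and> \<epsilon> > 0 \<longrightarrow>
            (\<exists>fp fm :: complex^'n \<Rightarrow> real.
               smooth_on \<Omega> fp \<and> smooth_on \<Omega> fm \<and>
               (\<forall>x\<in>\<Omega>. 0 \<le> fp x \<and> 0 \<le> fm x \<and> f x = fp x - fm x) \<and>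
               L1norm \<Omega> fp \<le> L1norm \<Omega> f + ennreal \<epsilon> \<and>
               L1norm \<Omega> fm \<le> L1norm \<Omega> f + ennreal \<epsilon> \<and>
               star_norm \<Omega> fp \<le> star_norm \<Omega> f + ennreal \<epsilon> \<and>
               star_norm \<Omega> fm \<le> star_norm \<Omega> f + ennreal \<epsilon>))
       \<and> (\<forall>\<mu> \<mu>' :: (complex^'n) measure.
            sets \<mu> = sets borel \<and> sets \<mu>' = sets borel \<and>
            finite_measure \<mu> \<and> finite_measure \<mu>' \<and>
            compact_support_in \<Omega> \<mu> \<and> compact_support_in \<Omega> \<mu>' \<and>
            (\<forall>A\<in>sets borel. emeasure \<mu> A \<le> emeasure \<mu>' A) \<and>
            Wstar_Holder \<Omega> \<mu>' \<longrightarrow> Wstar_Holder \<Omega> \<mu>)"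
  using smooth_nonneg_decomposition[OF assms(1,4)] Wstar_Holder_mono[OF assms(1,4)] by blast

end
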